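(* Let $\mathcal G$ be a $\Gamma$-periodic graph with fundamental graph $\mathcal G_*=(\mathcal V_*,\mathcal A_* )$, $\nu=\#\mathcal V_*$, and consider the Schrödinger operators $H=A+Q$ with $\Gamma$-periodic (complex-valued) potentials $Q$. (i) For every $n\in\mathbb N$ and $\mathrm m\in\mathbb Z^d$ the functional $$\mathcal I_n^{\mathrm m}(Q)=\sum_{\substack{r\in\{1,\dots,n\},\ \mathbf c\in\widetilde{\mathcal P}\setminus\mathcal P\\ r|\mathbf c|=n,\ r\tau(\mathbf c)=\mathrm m}}\frac1r\,\omega^r(\mathbf c,Q)$$ is a Floquet spectral invariant of $H$. Moreover, $\{\mathcal I_n^{\mathrm m}(Q):\ n\in\{1,\dots,\nu\},\ \mathrm m\in\mathbb Z^d\}$ is a complete system of Floquet spectral invariants of $H$. (ii) For every $n\in\mathbb N$ the functional $$\mathcal I_n(Q)=\sum_{\substack{r\in\{1,\dots,n\},\ \mathbf c\in\widetilde{\mathcal P}\setminus\mathcal P\\ r|\mathbf c|=n}}\frac1r\,\omega^r(\mathbf c,Q)$$ is a periodic spectral invariant of $H$, and $\{\mathcal I_n(Q):\ n\in\{1,\dots,\nu\}\}$ is a complete system of periodic spectral invariants of $H$.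
   Context: Let $\Gamma$ be a lattice of rank $d$ in $\mathbb R^d$ with basis $\mathfrak a_1,\dots,\mathfrak a_d$ and fundamental cell $\Omega=\{\sum_s x_s\mathfrak a_s: x_s\in[0,1)\}$. A $\Gamma$-periodic graph $\mathcal G=(\mathcal V,\mathcal E)$ is a connected, locally finite graph embedded in $\mathbb R^d$, invariant under translation by every $\mathfrak a\in\Gamma$, with finite quotient $\mathcal G_*=\mathcal G/\Gamma$; $\mathcal G$ has no loops, multiple edges are allowed. Each unoriented edge is counted with both orientations; $\mathcal A$ is the set of oriented edges and $\bar{\mathbf e}=(v,u)$ is the inverse of $\mathbf e=(u,v)$. The fundamental graph $\mathcal G_*=(\mathcal V_*,\mathcal A_* )$ has vertex set $\mathcal V/\Gamma$ and oriented edge set $\mathcal A/\Gamma$ (it may contain loops and multiple edges); $\nu=\#\mathcal V_*$. Every vertex is uniquely $v=v_0+[v]$ with $v_0\in\Omega$, $[v]\in\Gamma$; for $\mathbf e=(u,v)\in\mathcal A$ the edge index is $\tau(\mathbf e)=[v]_{\mathbb A}-[u]_{\mathbb A}\in\mathbb Z^d$, where $\mathbf x_{\mathbb A}$ denotes coordinates with respect to $\mathfrak a_1,\dots,\mathfrak a_d$; it is $\Gamma$-invariant, hence defines $\tau(\mathbf e)$ for $\mathbf e\in\mathcal A_*$, and $\tau(\bar{\mathbf e})=-\tau(\mathbf e)$. A $\Gamma$-periodic potential is a function $Q:\mathcal V_*\to\mathbb C$. For $k\in\mathbb T^d=\mathbb R^d/(2\pi\mathbb Z)^d$ the Floquet operator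 on $\ell^2(\mathcal V_* )\cong\mathbb C^\nu$ is $H(k)=A(k)+Q$, $(A(k)f)(v)=\sum_{\mathbf e=(v,u)\in\mathcal A_*}e^{i\langle\tau(\mathbf e),k\rangle}f(u)$, $(Qf)(v)=Q(v)f(v)$. The Floquet spectrum of $H=A+Q$ is the family $\{\sigma(A(k)+Q):k\in\mathbb T^d\}$; the periodic spectrum is $\sigma(A(0)+Q)$ (eigenvalues with multiplicity). A functional $\mathcal I(Q)$ is a Floquet (resp. periodic) spectral invariant if equality of the Floquet (resp. periodic) spectra of $A+Q_1$ and $A+Q_2$ implies $\mathcal I(Q_1)=\mathcal I(Q_2)$; a family $\{\mathcal I_s\}_{s\in S}$ is a complete system of Floquet (resp. periodic) spectral invariants if: the Floquet (resp. periodic) spectra of $A+Q_1$, $A+Q_2$ coincide iff $\mathcal I_s(Q_1)=\mathcal I_s(Q_2)$ for all $s\in S$. Paths, cycles: a path is $(\mathbf e_1,\dots,\mathbf e_n)$, $\mathbf e_j=(v_j,v_{j+1})$, of length $n$; closed if $v_{n+1}=v_1$; a closed path is prime if it is not the $r$-fold repetition of a closed path with $r\ge2$. A cycle $\mathbf c=[\mathbf e_1,\dots,\mathbf e_n]$ is the class of a closed path under cyclic permutations; prime cycle = class of a prime closed path; $|\mathbf c|=n$; index $\tau(\mathbf c)=\sum_j\tau(\mathbf e_j)$. The modified fundamental graph $\widetilde{\mathcal G}_*$ is $\mathcal G_*$ with one added loop $\mathbf e_v$ at each $v\in\mathcal V_*$, with $\tau(\mathbf e_v)=0$. The weight of a cycle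 $\mathbf c=[\mathbf e_1,\dots,\mathbf e_n]$ in $\widetilde{\mathcal G}_*$ is $\omega(\mathbf c,Q)=\prod_j\omega(\mathbf e_j)$, $\omega(\mathbf e)=1$ for $\mathbf e\in\mathcal A_*$, $\omega(\mathbf e_v)=Q(v)$. $\mathcal P$ and $\widetilde{\mathcal P}$ denote the sets of prime cycles in $\mathcal G_*$ and $\widetilde{\mathcal G}_*$. *)

theory Defs
  imports "HOL-Analysis.Analysis" "HOL-Computational_Algebra.Polynomial"
begin

text \<open>The fundamental graph G_* has vertex set the finite type 'v (so nu = CARD('v)),
 oriented edge set E :: 'e set, source/target maps src, tgt, the edge inversion flip,
 and the edge index tau :: 'e => int^'d (coordinates w.r.t. the lattice basis).\<close>

definition inner_int_real :: "int ^ 'd \<Rightarrow> real ^ 'd \<Rightarrow> real" where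
  "inner_int_real t k = (\<Sum>i\<in>UNIV. real_of_int (t $ i) * k $ i)"

definition is_walk :: "('a \<Rightarrow> 'v) \<Rightarrow> ('a \<Rightarrow> 'v) \<Rightarrow> 'a set \<Rightarrow> 'v \<Rightarrow> 'a list \<Rightarrow> 'v \<Rightarrow> bool" where
  "is_walk src tgt Arcs u xs v \<longleftrightarrow> set xs \<subseteq> Arcs \<and>
     (if xs = [] then u = v
      else src (hd xs) = u \<and> tgt (last xs) = v \<and>
           (\<forall>j. Suc j < length xs \<longrightarrow> tgt (xs ! j) = src (xs ! Suc j)))"

text \<open>Standing assumptions: G_* is the quotient of a connected Gamma-periodic graph
 without loops: each unoriented edge appears with both orientations, tau(inverse e) = - tau e,
 G_* has no loops of index 0 (these would be loops of G), and the lifted graph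
 (vertices V_* x Z^d) is connected, i.e. any two vertices are joined by a path of any prescribed index.\<close>
definition periodic_fundamental_graph ::
  "'e set \<Rightarrow> ('e \<Rightarrow> 'v::finite) \<Rightarrow> ('e \<Rightarrow> 'v) \<Rightarrow> ('e \<Rightarrow> 'e) \<Rightarrow> ('e \<Rightarrow> int ^ 'd) \<Rightarrow> bool" where
  "periodic_fundamental_graph E src tgt flip \<tau> \<longleftrightarrow>
     finite E \<and>
     (\<forall>e\<in>E. flip e \<in> E \<and> flip (flip e) = e \<and> flip e \<noteq> e \<and>
             src (flip e) = tgt e \<and> tgt (flip e) = src e \<and> \<tau> (flip e) = - \<tau> e) \<and>
     (\<forall>e\<in>E. src e = tgt e \<longrightarrow> \<tau> e \<noteq> 0) \<and>
     (\<forall>u v m. \<exists>xs. is_walk src tgt E u xs v \<and> sum_list (map \<tau> xs) = m)"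

definition floquet_matrix ::
  "'e set \<Rightarrow> ('e \<Rightarrow> 'v::finite) \<Rightarrow> ('e \<Rightarrow> 'v) \<Rightarrow> ('e \<Rightarrow> int ^ 'd) \<Rightarrow> ('v \<Rightarrow> complex)
     \<Rightarrow> real ^ 'd \<Rightarrow> complex ^ 'v ^ 'v" where
  "floquet_matrix E src tgt \<tau> Q k =
     (\<chi> v u. (\<Sum>e\<in>{e\<in>E. src e = v \<and> tgt e = u}. exp (\<i> * complex_of_real (inner_int_real (\<tau> e) k)))
            + (if v = u then Q v else 0))"

definition charpoly_mat :: "complex ^ 'n ^ 'n \<Rightarrow> complex poly" where
  "charpoly_mat M = det (\<chi> i j. (if i = j then [:0, 1:] else 0) - [:M $ i $ j:])"

definition spectrum_mset :: "complex ^ 'n ^ 'n \<Rightarrow> complex multiset" where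
  "spectrum_mset M = proots (charpoly_mat M)"

definition same_floquet_spectrum where
  "same_floquet_spectrum E src tgt \<tau> Q1 Q2 \<longleftrightarrow>
     (\<forall>k. spectrum_mset (floquet_matrix E src tgt \<tau> Q1 k) = spectrum_mset (floquet_matrix E src tgt \<tau> Q2 k))"

definition same_periodic_spectrum where
  "same_periodic_spectrum E src tgt \<tau> Q1 Q2 \<longleftrightarrow>
     spectrum_mset (floquet_matrix E src tgt \<tau> Q1 0) = spectrum_mset (floquet_matrix E src tgt \<tau> Q2 0)"

definition closed_path :: "('a \<Rightarrow> 'v) \<Rightarrow> ('a \<Rightarrow> 'v) \<Rightarrow> 'a set \<Rightarrow> 'a list \<Rightarrow> bool" where
  "closed_path src tgt Arcs xs \<longleftrightarrow> xs \<noteq> [] \<and> set xs \<subseteq> Arcs \<and>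
     (\<forall>j<length xs. tgt (xs ! j) = src (xs ! ((Suc j) mod length xs)))"

definition prime_path :: "'a list \<Rightarrow> bool" where
  "prime_path xs \<longleftrightarrow> \<not> (\<exists>ys r. r \<ge> 2 \<and> xs = concat (replicate r ys))"

definition cycle_of :: "'a list \<Rightarrow> 'a list set" where
  "cycle_of xs = range (\<lambda>j. rotate j xs)"

definition prime_cycles :: "('a \<Rightarrow> 'v) \<Rightarrow> ('a \<Rightarrow> 'v) \<Rightarrow> 'a set \<Rightarrow> 'a list set set" where
  "prime_cycles src tgt Arcs = {cycle_of xs | xs. closed_path src tgt Arcs xs \<and> prime_path xs}"

definition cycle_rep :: "'a list set \<Rightarrow> 'a list" where
  "cycle_rep c = (SOME xs. xs \<in> c)"

definition cycle_len :: "'a list set \<Rightarrow> nat" where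
  "cycle_len c = length (cycle_rep c)"

definition cycle_index :: "('a \<Rightarrow> int ^ 'd) \<Rightarrow> 'a list set \<Rightarrow> int ^ 'd" where
  "cycle_index \<tau> c = sum_list (map \<tau> (cycle_rep c))"

definition cycle_weight :: "('a \<Rightarrow> complex) \<Rightarrow> 'a list set \<Rightarrow> complex" where
  "cycle_weight w c = prod_list (map w (cycle_rep c))"

section \<open>Modified fundamental graph: one extra loop e_v (= Inr v) at each vertex\<close>

definition msrc :: "('e \<Rightarrow> 'v) \<Rightarrow> 'e + 'v \<Rightarrow> 'v" where
  "msrc src a = (case a of Inl e \<Rightarrow> src e | Inr v \<Rightarrow> v)"

definition mtgt :: "('e \<Rightarrow> 'v) \<Rightarrow> 'e + 'v \<Rightarrow> 'v" where
  "mtgt tgt a = (case a of Inl e \<Rightarrow> tgt e | Inr v \<Rightarrow> v)"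

definition marcs :: "'e set \<Rightarrow> ('e + 'v) set" where
  "marcs E = Inl ` E \<union> range Inr"

definition mtau :: "('e \<Rightarrow> int ^ 'd) \<Rightarrow> 'e + 'v \<Rightarrow> int ^ 'd" where
  "mtau \<tau> a = (case a of Inl e \<Rightarrow> \<tau> e | Inr v \<Rightarrow> 0)"

definition mweight :: "('v \<Rightarrow> complex) \<Rightarrow> 'e + 'v \<Rightarrow> complex" where
  "mweight Q a = (case a of Inl e \<Rightarrow> 1 | Inr v \<Rightarrow> Q v)"

text \<open>P~ \ P : prime cycles of the modified graph that are not prime cycles of G_*
 (the latter embedded via Inl).\<close>
definition new_prime_cycles :: "'e set \<Rightarrow> ('e \<Rightarrow> 'v) \<Rightarrow> ('e \<Rightarrow> 'v) \<Rightarrow> ('e + 'v) list set set" where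
  "new_prime_cycles E src tgt =
     prime_cycles (msrc src) (mtgt tgt) (marcs E) - (\<lambda>c. map Inl ` c) ` prime_cycles src tgt E"

definition inv_I_nm ::
  "'e set \<Rightarrow> ('e \<Rightarrow> 'v) \<Rightarrow> ('e \<Rightarrow> 'v) \<Rightarrow> ('e \<Rightarrow> int ^ 'd) \<Rightarrow> nat \<Rightarrow> int ^ 'd \<Rightarrow> ('v \<Rightarrow> complex) \<Rightarrow> complex" where
  "inv_I_nm E src tgt \<tau> n m Q =
     (\<Sum>(r, c) \<in> {(r, c). r \<in> {1..n} \<and> c \<in> new_prime_cycles E src tgt \<and>
                        r * cycle_len c = n \<and> int r *s cycle_index (mtau \<tau>) c = m}.
        (1 / of_nat r) * cycle_weight (mweight Q) c ^ r)"

definition inv_I_n ::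
  "'e set \<Rightarrow> ('e \<Rightarrow> 'v) \<Rightarrow> ('e \<Rightarrow> 'v) \<Rightarrow> nat \<Rightarrow> ('v \<Rightarrow> complex) \<Rightarrow> complex" where
  "inv_I_n E src tgt n Q =
     (\<Sum>(r, c) \<in> {(r, c). r \<in> {1..n} \<and> c \<in> new_prime_cycles E src tgt \<and> r * cycle_len c = n}.
        (1 / of_nat r) * cycle_weight (mweight Q) c ^ r)"

end

theory Submission
  imports Defs "Jordan_Normal_Form.Schur_Decomposition" "HOL-Computational_Algebra.Polynomial_FPS"
begin

text \<open>
  Write \<open>H(k) = A(k) + Q\<close> as the weighted adjacency matrix of the modified fundamental graph:
  an arc \<open>e\<close> carries \<open>exp (i \<langle>\<tau>(e), k\<rangle>)\<close> and the added loop at \<open>v\<close> carries \<open>Q(v)\<close>.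
  Then \<open>tr H(k)\<^sup>n\<close> is a sum over closed paths of length \<open>n\<close>. Every closed path is, uniquely, the
  \<open>r\<close>-th power of a rotation of a prime cycle \<open>c\<close>, and the \<open>|c|\<close> rotations contribute equally, so
  \<open>tr H(k)\<^sup>n = n \<Sum>\<^sub>m exp (i \<langle>m, k\<rangle>) (I\<^sub>n\<^sup>m(Q) + K\<^sub>n\<^sup>m)\<close>, where \<open>K\<^sub>n\<^sup>m\<close> collects the prime cycles of \<open>\<G>\<^sub>*\<close>
  itself, whose weight is 1. The spectrum of a \<open>\<nu> \<times> \<nu>\<close> matrix determines the traces of all its powers
  and, by Newton's identities, is determined by those of the first \<open>\<nu>\<close> powers. Finally the functions
  \<open>k \<mapsto> exp (i \<langle>m, k\<rangle>)\<close> for distinct \<open>m\<close> are linearly independent, so the traces for all \<open>k\<close>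
  determine every \<open>I\<^sub>n\<^sup>m(Q)\<close>; taking \<open>k = 0\<close> gives the periodic case.
\<close>

no_notation Matrix.vec_index (infixl "$" 100)

definition rotation_period :: "'a list \<Rightarrow> nat" where
  "rotation_period xs = (LEAST j. 0 < j \<and> rotate j xs = xs)"

lemma rotation_period:
  assumes "xs \<noteq> []"
  shows rotation_period_pos: "0 < rotation_period xs"
    and rotate_rotation_period: "rotate (rotation_period xs) xs = xs"
    and rotation_period_le_length: "rotation_period xs \<le> length xs"
proof -
  have len: "0 < length xs \<and> rotate (length xs) xs = xs" using assms by simp
  then have "0 < rotation_period xs \<and> rotate (rotation_period xs) xs = xs"
    unfolding rotation_period_def by (rule LeastI)
  then show "0 < rotation_period xs" "rotate (rotation_period xs) xs = xs" by auto
  show "rotation_period xs \<le> length xs" unfolding rotation_period_def using len by (rule Least_le)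
qed

lemma rotate_ne_below_rotation_period:
  "0 < j \<Longrightarrow> j < rotation_period xs \<Longrightarrow> rotate j xs \<noteq> xs"
  unfolding rotation_period_def using not_less_Least by blast

lemma rotate_mult_rotation_period:
  assumes "xs \<noteq> []" shows "rotate (a * rotation_period xs) xs = xs"
proof (induction a)
  case (Suc a)
  have "rotate (Suc a * rotation_period xs) xs = rotate (rotation_period xs) (rotate (a * rotation_period xs) xs)"
    by (simp add: rotate_rotate)
  then show ?case using Suc rotate_rotation_period[OF assms] by simp
qed simp

lemma rotate_eq_self_iff:
  assumes "xs \<noteq> []"
  shows "rotate j xs = xs \<longleftrightarrow> rotation_period xs dvd j"
proof
  assume "rotation_period xs dvd j"
  then obtain a where "j = a * rotation_period xs" by (metis dvd_def mult.commute)
  then show "rotate j xs = xs" using rotate_mult_rotation_period[OF assms] by simp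
next
  let ?p = "rotation_period xs"
  assume "rotate j xs = xs"
  then have "rotate (j mod ?p) (rotate ((j div ?p) * ?p) xs) = xs"
    by (metis rotate_rotate mod_div_mult_eq)
  then have "rotate (j mod ?p) xs = xs" using rotate_mult_rotation_period[OF assms] by simp
  moreover have "j mod ?p < ?p" using rotation_period_pos[OF assms] by simp
  ultimately have "j mod ?p = 0" using rotate_ne_below_rotation_period by blast
  then show "?p dvd j" by auto
qed

lemma rotation_period_dvd_length: "xs \<noteq> [] \<Longrightarrow> rotation_period xs dvd length xs"
  using rotate_eq_self_iff[of xs "length xs"] by simp

lemma nth_mod_rotation_period:
  assumes ne: "xs \<noteq> []" and i: "i < length xs"
  shows "xs ! (i mod rotation_period xs) = xs ! i"
proof -
  let ?p = "rotation_period xs"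
  have "i mod ?p < length xs"
    using rotation_period_pos[OF ne] rotation_period_le_length[OF ne] by (meson mod_less_divisor less_le_trans)
  then have "rotate (i div ?p * ?p) xs ! (i mod ?p) = xs ! ((i div ?p * ?p + i mod ?p) mod length xs)"
    by (rule nth_rotate)
  also have "\<dots> = xs ! i" using i by simp
  finally show ?thesis using rotate_mult_rotation_period[OF ne] by simp
qed

lemma length_concat_replicate [simp]: "length (concat (replicate r ys)) = r * length ys"
  by (induction r) auto

lemma prod_list_concat_replicate: "prod_list (map f (concat (replicate r ys))) = prod_list (map f ys) ^ r"
  by (induction r) auto

lemma nth_concat_replicate:
  "i < r * length ys \<Longrightarrow> concat (replicate r ys) ! i = ys ! (i mod length ys)"
proof (induction r arbitrary: i)
  case (Suc r)
  then show ?case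
    by (cases "i < length ys") (auto simp: nth_append le_mod_geq)
qed simp

lemma take_concat_replicate:
  assumes "k \<le> r"
  shows "take (k * length ys) (concat (replicate r ys)) = concat (replicate k ys)"
proof -
  obtain d where "r = k + d" using assms le_Suc_ex by blast
  then show ?thesis by (simp add: replicate_add)
qed

lemma concat_replicate_concat_replicate:
  "concat (replicate a (concat (replicate b zs))) = concat (replicate (a * b) zs)"
  by (induction a) (simp_all add: replicate_add)

lemma rotate_length_concat_replicate:
  "rotate (length ys) (concat (replicate r ys)) = concat (replicate r ys)"
proof (cases r)
  case (Suc r')
  then have "rotate (length ys) (concat (replicate r ys)) = concat (replicate r' ys @ [ys])"
    by (simp add: rotate_append)
  then show ?thesis using Suc by (simp add: replicate_append_same)
qed simp

lemma concat_replicate_rotation_period: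
  assumes ne: "xs \<noteq> []"
  shows "concat (replicate (length xs div rotation_period xs) (take (rotation_period xs) xs)) = xs"
proof (rule nth_equalityI)
  let ?p = "rotation_period xs"
  have p: "0 < ?p" "?p \<le> length xs" "?p dvd length xs"
    using rotation_period_pos[OF ne] rotation_period_le_length[OF ne] rotation_period_dvd_length[OF ne]
    by auto
  then have len: "length (concat (replicate (length xs div ?p) (take ?p xs))) = length xs"
    by (simp add: min_def)
  then show "length (concat (replicate (length xs div ?p) (take ?p xs))) = length xs" .
  fix i assume "i < length (concat (replicate (length xs div ?p) (take ?p xs)))"
  then have i: "i < length xs" unfolding len .
  then show "concat (replicate (length xs div ?p) (take ?p xs)) ! i = xs ! i"
    using p nth_mod_rotation_period[OF ne i] by (simp add: nth_concat_replicate min_def)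
qed

lemma prime_path_iff_rotation_period:
  assumes ne: "xs \<noteq> []"
  shows "prime_path xs \<longleftrightarrow> rotation_period xs = length xs"
proof
  let ?p = "rotation_period xs"
  assume prime: "prime_path xs"
  obtain q where q: "length xs = ?p * q" using rotation_period_dvd_length[OF ne] by blast
  then have "length xs div ?p = q" using rotation_period_pos[OF ne] by simp
  then have "\<not> 2 \<le> q"
    using prime concat_replicate_rotation_period[OF ne] unfolding prime_path_def by metis
  moreover have "q \<noteq> 0" using q ne by (metis length_0_conv mult_0_right)
  ultimately show "?p = length xs" using q by (simp add: not_le less_2_cases_iff)
next
  assume period: "rotation_period xs = length xs"
  show "prime_path xs" unfolding prime_path_def
  proof
    assume "\<exists>ys r. 2 \<le> r \<and> xs = concat (replicate r ys)"
    then obtain ys r where r: "2 \<le> r" and xs: "xs = concat (replicate r ys)" by blast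
    have "rotate (length ys) xs = xs" unfolding xs by (rule rotate_length_concat_replicate)
    then have "length xs dvd length ys" using period rotate_eq_self_iff[OF ne] by simp
    moreover have "ys \<noteq> []" using xs ne by auto
    moreover have "length xs = r * length ys" using xs by simp
    ultimately show False using r by (auto dest: dvd_imp_le)
  qed
qed

lemma rotate_inject: "rotate n xs = rotate n ys \<Longrightarrow> xs = ys"
  by (induction n) (auto dest: injD[OF inj_rotate1])

lemma rotate_rotate_eq_self_iff: "rotate j (rotate i xs) = rotate i xs \<longleftrightarrow> rotate j xs = xs"
proof -
  have "rotate j (rotate i xs) = rotate i (rotate j xs)" by (simp add: rotate_rotate add.commute)
  then show ?thesis using rotate_inject[of i "rotate j xs" xs] by auto
qed

lemma rotation_period_rotate: "rotation_period (rotate i xs) = rotation_period xs"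
  unfolding rotation_period_def rotate_rotate_eq_self_iff ..

lemma prime_path_rotate: "xs \<noteq> [] \<Longrightarrow> prime_path (rotate i xs) \<longleftrightarrow> prime_path xs"
  by (simp add: prime_path_iff_rotation_period rotation_period_rotate)

lemma inj_on_rotate_prime_path:
  assumes ne: "xs \<noteq> []" and prime: "prime_path xs"
  shows "inj_on (\<lambda>j. rotate j xs) {..<length xs}"
proof -
  have "a = b" if ab: "a \<le> b" "b < length xs" "rotate a xs = rotate b xs" for a b
  proof -
    have "rotate (b - a) (rotate a xs) = rotate b xs" using ab(1) by (simp add: rotate_rotate)
    then have "rotate (b - a) (rotate a xs) = rotate a xs" using ab(3) by simp
    then have "rotate (b - a) xs = xs" by (simp only: rotate_rotate_eq_self_iff)
    then have "length xs dvd b - a"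
      using rotate_eq_self_iff[OF ne] prime_path_iff_rotation_period[OF ne] prime by simp
    then show "a = b" using ab by (auto dest: dvd_imp_le)
  qed
  then show ?thesis unfolding inj_on_def by (metis lessThan_iff nat_le_linear)
qed

lemma rotate_in_cycle_of: "rotate j xs \<in> cycle_of xs"
  unfolding cycle_of_def by (rule rangeI)

lemma in_cycle_of_self: "xs \<in> cycle_of xs"
  using rotate_in_cycle_of[of 0 xs] by simp

lemma cycle_of_eq_image:
  assumes "xs \<noteq> []" shows "cycle_of xs = (\<lambda>j. rotate j xs) ` {..<length xs}"
  unfolding cycle_of_def using assms by (auto simp: image_iff intro: rotate_conv_mod)

lemma finite_cycle_of: "finite (cycle_of xs)"
  by (cases "xs = []") (simp add: cycle_of_def, simp add: cycle_of_eq_image)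

lemma card_cycle_of: "xs \<noteq> [] \<Longrightarrow> prime_path xs \<Longrightarrow> card (cycle_of xs) = length xs"
  by (simp add: cycle_of_eq_image card_image inj_on_rotate_prime_path)

lemma cycle_of_rotate_subset: "cycle_of (rotate i xs) \<subseteq> cycle_of xs"
  unfolding cycle_of_def by (auto simp: rotate_rotate)

lemma cycle_of_rotate: "cycle_of (rotate i xs) = cycle_of xs"
proof (cases "xs = []")
  case False
  let ?n = "length xs"
  have "(?n - i mod ?n + i) mod ?n = (?n - i mod ?n + i mod ?n) mod ?n"
    by (simp add: mod_add_right_eq)
  also have "\<dots> = 0" using False by simp
  finally have "rotate (?n - i mod ?n + i) xs = xs" by (metis rotate_conv_mod rotate0 id_apply)
  then have "rotate (?n - i mod ?n) (rotate i xs) = xs" by (simp add: rotate_rotate)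
  then have "cycle_of xs \<subseteq> cycle_of (rotate i xs)"
    using cycle_of_rotate_subset[of "?n - i mod ?n" "rotate i xs"] by simp
  then show ?thesis using cycle_of_rotate_subset by blast
qed simp

section \<open>Closed paths as powers of prime cycles\<close>

lemma closed_path_rotate:
  assumes "closed_path s t A xs" shows "closed_path s t A (rotate i xs)"
proof -
  let ?n = "length xs"
  have ne: "xs \<noteq> []" and next_arc: "\<forall>j<?n. t (xs ! j) = s (xs ! (Suc j mod ?n))"
    using assms by (auto simp: closed_path_def)
  have "t (rotate i xs ! j) = s (rotate i xs ! (Suc j mod ?n))" if j: "j < ?n" for j
  proof -
    have "(i + Suc j mod ?n) mod ?n = Suc ((i + j) mod ?n) mod ?n"
      by (simp add: mod_add_right_eq mod_Suc_eq)
    moreover have "t (xs ! ((i + j) mod ?n)) = s (xs ! (Suc ((i + j) mod ?n) mod ?n))"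
      using next_arc ne by simp
    ultimately show ?thesis using j ne by (simp add: nth_rotate)
  qed
  then show ?thesis using assms by (simp add: closed_path_def)
qed

lemma closed_path_concat_replicate_iff:
  assumes r: "0 < r"
  shows "closed_path s t A (concat (replicate r ys)) \<longleftrightarrow> closed_path s t A ys"
proof (cases "ys = []")
  case False
  let ?xs = "concat (replicate r ys)" and ?L = "length ys"
  let ?n = "r * ?L" and ?P = "\<lambda>j. t (ys ! j) = s (ys ! (Suc j mod ?L))"
  have L: "0 < ?L" "?L \<le> ?n" using False r by auto
  have "t (?xs ! j) = s (?xs ! (Suc j mod ?n)) \<longleftrightarrow> ?P (j mod ?L)" if "j < ?n" for j
  proof -
    have "?xs ! (Suc j mod ?n) = ys ! (Suc j mod ?L)"
      using L by (simp add: nth_concat_replicate mod_mod_cancel)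
    then show ?thesis using that by (simp add: nth_concat_replicate mod_Suc_eq)
  qed
  then have "(\<forall>j<?n. t (?xs ! j) = s (?xs ! (Suc j mod ?n))) \<longleftrightarrow> (\<forall>j<?n. ?P (j mod ?L))"
    by auto
  also have "\<dots> \<longleftrightarrow> (\<forall>j<?L. ?P j)"
    using L by (metis mod_less mod_less_divisor less_le_trans)
  finally show ?thesis using r False by (simp add: closed_path_def gr0_conv_Suc)
qed (simp add: closed_path_def)

lemma rotation_period_concat_replicate:
  assumes prime: "prime_path ys" and ne: "ys \<noteq> []" and r: "0 < r"
  shows "rotation_period (concat (replicate r ys)) = length ys"
proof -
  let ?xs = "concat (replicate r ys)"
  let ?p = "rotation_period ?xs"
  let ?z = "take ?p ?xs" and ?q = "length ?xs div ?p"
  have xne: "?xs \<noteq> []" using ne r by (metis length_0_conv length_concat_replicate mult_is_0 not_gr0)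
  have "?p dvd length ys"
    using rotate_eq_self_iff[OF xne] rotate_length_concat_replicate by metis
  then obtain k where k: "length ys = k * ?p" by (metis dvd_def mult.commute)
  have z: "length ?z = ?p" using rotation_period_le_length[OF xne] by simp
  have "k \<le> ?q" using k r rotation_period_pos[OF xne] by simp
  have "ys = take (length ys) ?xs" using take_concat_replicate[of 1 r ys] r by simp
  also have "\<dots> = take (k * length ?z) (concat (replicate ?q ?z))"
    by (simp only: concat_replicate_rotation_period[OF xne] k z)
  also have "\<dots> = concat (replicate k ?z)" using \<open>k \<le> ?q\<close> by (rule take_concat_replicate)
  finally have "\<not> 2 \<le> k" using prime unfolding prime_path_def by metis
  moreover have "k \<noteq> 0" using k ne by (metis length_0_conv mult_0)
  ultimately show ?thesis using k by (simp add: not_le less_2_cases_iff)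
qed

lemma prime_path_take_rotation_period:
  assumes ne: "xs \<noteq> []"
  shows "prime_path (take (rotation_period xs) xs)"
  unfolding prime_path_def
proof
  let ?p = "rotation_period xs"
  assume "\<exists>zs r. 2 \<le> r \<and> take ?p xs = concat (replicate r zs)"
  then obtain zs r where r: "2 \<le> r" and zs: "take ?p xs = concat (replicate r zs)" by blast
  have "xs = concat (replicate (length xs div ?p * r) zs)"
    using concat_replicate_rotation_period[OF ne] unfolding zs concat_replicate_concat_replicate ..
  then have "rotate (length zs) xs = xs" by (metis rotate_length_concat_replicate)
  then have "?p dvd length zs" using rotate_eq_self_iff[OF ne] by simp
  moreover have "r * length zs = ?p"
    using arg_cong[OF zs, of length] rotation_period_le_length[OF ne] by simp
  moreover have "zs \<noteq> []" using calculation(2) rotation_period_pos[OF ne] by auto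
  ultimately show False using r by (auto dest: dvd_imp_le)
qed

lemma prime_cycleD:
  assumes "c \<in> prime_cycles s t A" and "ys \<in> c"
  shows "closed_path s t A ys" and "prime_path ys" and "c = cycle_of ys"
proof -
  obtain xs where xs: "c = cycle_of xs" "closed_path s t A xs" "prime_path xs"
    using assms(1) unfolding prime_cycles_def by blast
  obtain j where j: "ys = rotate j xs" using assms(2) xs(1) unfolding cycle_of_def by blast
  have "xs \<noteq> []" using xs(2) by (simp add: closed_path_def)
  then show "closed_path s t A ys" "prime_path ys" "c = cycle_of ys"
    using j xs by (simp_all add: closed_path_rotate prime_path_rotate cycle_of_rotate)
qed

lemma cycle_rep_in_prime_cycle:
  assumes "c \<in> prime_cycles s t A" shows "cycle_rep c \<in> c"
proof -
  obtain xs where "c = cycle_of xs" using assms unfolding prime_cycles_def by blast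
  then show ?thesis unfolding cycle_rep_def by (metis in_cycle_of_self someI)
qed

lemma cycle_rep_eq_rotate:
  assumes "c \<in> prime_cycles s t A" and "ys \<in> c"
  obtains j where "cycle_rep c = rotate j ys"
  using cycle_rep_in_prime_cycle[OF assms(1)] prime_cycleD(3)[OF assms] unfolding cycle_of_def by auto

lemma length_in_prime_cycle:
  "c \<in> prime_cycles s t A \<Longrightarrow> ys \<in> c \<Longrightarrow> length ys = cycle_len c"
  unfolding cycle_len_def by (metis cycle_rep_eq_rotate length_rotate)

lemma card_prime_cycle: "c \<in> prime_cycles s t A \<Longrightarrow> card c = cycle_len c"
  by (metis card_cycle_of closed_path_def cycle_rep_in_prime_cycle length_in_prime_cycle prime_cycleD)

lemma finite_prime_cycle: "c \<in> prime_cycles s t A \<Longrightarrow> finite c"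
  by (metis cycle_rep_in_prime_cycle finite_cycle_of prime_cycleD(3))

lemma mset_rotate: "mset (rotate n xs) = mset xs"
proof (induction n)
  case (Suc n)
  then show ?case by (cases "rotate n xs") auto
qed simp

lemma cycle_weight_eq:
  assumes "c \<in> prime_cycles s t A" and "ys \<in> c"
  shows "cycle_weight w c = prod_list (map w ys)"
  using cycle_rep_eq_rotate[OF assms] unfolding cycle_weight_def
  by (metis mset_map mset_rotate prod_mset_prod_list)

definition prime_cycle_powers ::
  "('a \<Rightarrow> 'v) \<Rightarrow> ('a \<Rightarrow> 'v) \<Rightarrow> 'a set \<Rightarrow> nat \<Rightarrow> (nat \<times> 'a list set) set" where
  "prime_cycle_powers s t A n =
     {(r, c). r \<in> {1..n} \<and> c \<in> prime_cycles s t A \<and> r * cycle_len c = n}"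

lemma finite_prime_cycle_powers:
  assumes "finite A" shows "finite (prime_cycle_powers s t A n)"
proof (rule finite_subset)
  show "prime_cycle_powers s t A n \<subseteq> {1..n} \<times> (cycle_of ` {xs. set xs \<subseteq> A \<and> length xs \<le> n})"
  proof
    fix x assume "x \<in> prime_cycle_powers s t A n"
    then obtain r c where x: "x = (r, c)" and r: "r \<in> {1..n}" and c: "c \<in> prime_cycles s t A"
      and rc: "r * cycle_len c = n"
      unfolding prime_cycle_powers_def by auto
    let ?ys = "cycle_rep c"
    have ys: "?ys \<in> c" by (rule cycle_rep_in_prime_cycle[OF c])
    have "length ?ys \<le> n" using r rc unfolding cycle_len_def by (metis atLeastAtMost_iff mult_le_mono1 mult_1)
    moreover have "set ?ys \<subseteq> A" using prime_cycleD(1)[OF c ys] by (simp add: closed_path_def)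
    ultimately show "x \<in> {1..n} \<times> (cycle_of ` {xs. set xs \<subseteq> A \<and> length xs \<le> n})"
      using x r prime_cycleD(3)[OF c ys] by blast
  qed
  show "finite ({1..n} \<times> (cycle_of ` {xs. set xs \<subseteq> A \<and> length xs \<le> n}))"
    using finite_lists_length_le[OF assms] by simp
qed

lemma closed_path_prime_root:
  assumes "closed_path s t A xs"
  defines "ys \<equiv> take (rotation_period xs) xs" and "r \<equiv> length xs div rotation_period xs"
  shows "(r, cycle_of ys) \<in> prime_cycle_powers s t A (length xs)"
    and "concat (replicate r ys) = xs"
proof -
  have ne: "xs \<noteq> []" using assms(1) by (simp add: closed_path_def)
  have p: "0 < rotation_period xs" "rotation_period xs \<le> length xs" "rotation_period xs dvd length xs"
    using rotation_period_pos[OF ne] rotation_period_le_length[OF ne] rotation_period_dvd_length[OF ne]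
    by auto
  show xs: "concat (replicate r ys) = xs"
    unfolding ys_def r_def by (rule concat_replicate_rotation_period[OF ne])
  have r: "0 < r" using p unfolding r_def by (simp add: div_greater_zero_iff)
  have "closed_path s t A ys" using assms(1) closed_path_concat_replicate_iff[OF r] xs by metis
  moreover have "prime_path ys" unfolding ys_def by (rule prime_path_take_rotation_period[OF ne])
  ultimately have c: "cycle_of ys \<in> prime_cycles s t A" unfolding prime_cycles_def by blast
  have "cycle_len (cycle_of ys) = rotation_period xs"
    using length_in_prime_cycle[OF c in_cycle_of_self] p unfolding ys_def by simp
  then show "(r, cycle_of ys) \<in> prime_cycle_powers s t A (length xs)"
    using c r p unfolding prime_cycle_powers_def r_def by auto
qed

lemma bij_betw_prime_cycle_powers_closed_paths:
  "bij_betw (\<lambda>((r, c), ys). concat (replicate r ys)) (Sigma (prime_cycle_powers s t A n) snd)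
     {xs. closed_path s t A xs \<and> length xs = n}"
proof (rule bij_betw_byWitness[where f' = "\<lambda>xs. ((length xs div rotation_period xs,
    cycle_of (take (rotation_period xs) xs)), take (rotation_period xs) xs)"])
  let ?root = "\<lambda>xs. ((length xs div rotation_period xs, cycle_of (take (rotation_period xs) xs)),
                     take (rotation_period xs) xs)"
  have power: "concat (replicate r ys) \<in> {xs. closed_path s t A xs \<and> length xs = n}"
    and root: "?root (concat (replicate r ys)) = ((r, c), ys)"
    if "(r, c) \<in> prime_cycle_powers s t A n" "ys \<in> c" for r c ys
  proof -
    have r: "0 < r" and c: "c \<in> prime_cycles s t A" and n: "r * cycle_len c = n"
      using that(1) unfolding prime_cycle_powers_def by auto
    have ne: "ys \<noteq> []" using prime_cycleD(1)[OF c that(2)] by (simp add: closed_path_def)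
    show "concat (replicate r ys) \<in> {xs. closed_path s t A xs \<and> length xs = n}"
      using closed_path_concat_replicate_iff[OF r, of s t A ys] prime_cycleD(1)[OF c that(2)]
        length_in_prime_cycle[OF c that(2)] n by simp
    show "?root (concat (replicate r ys)) = ((r, c), ys)"
      using rotation_period_concat_replicate[OF prime_cycleD(2)[OF c that(2)] ne r] ne r
        take_concat_replicate[of 1 r ys] prime_cycleD(3)[OF c that(2)] by simp
  qed
  show "\<forall>x\<in>Sigma (prime_cycle_powers s t A n) snd. ?root ((\<lambda>((r, c), ys). concat (replicate r ys)) x) = x"
  proof
    fix x assume "x \<in> Sigma (prime_cycle_powers s t A n) snd"
    then obtain r c ys where "x = ((r, c), ys)" "(r, c) \<in> prime_cycle_powers s t A n" "ys \<in> c"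
      by auto
    then show "?root ((\<lambda>((r, c), ys). concat (replicate r ys)) x) = x"
      using root[of r c ys] by (simp only: case_prod_conv)
  qed
  show "(\<lambda>((r, c), ys). concat (replicate r ys)) ` Sigma (prime_cycle_powers s t A n) snd
          \<subseteq> {xs. closed_path s t A xs \<and> length xs = n}"
    using power by auto
  show "\<forall>xs\<in>{xs. closed_path s t A xs \<and> length xs = n}. (\<lambda>((r, c), ys). concat (replicate r ys)) (?root xs) = xs"
    using closed_path_prime_root(2) by auto
  show "?root ` {xs. closed_path s t A xs \<and> length xs = n} \<subseteq> Sigma (prime_cycle_powers s t A n) snd"
    using closed_path_prime_root(1) in_cycle_of_self by fastforce
qed

lemma sum_closed_paths_eq_sum_prime_cycle_powers:
  assumes "finite A"
  shows "(\<Sum>xs | closed_path s t A xs \<and> length xs = n. F xs) =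
         (\<Sum>(r, c)\<in>prime_cycle_powers s t A n. \<Sum>ys\<in>c. F (concat (replicate r ys)))"
proof -
  let ?P = "prime_cycle_powers s t A n"
  have fin: "finite ?P" "\<forall>x\<in>?P. finite (snd x)"
    using finite_prime_cycle_powers[OF assms]
    by (auto simp: prime_cycle_powers_def intro: finite_prime_cycle)
  have "(\<Sum>xs | closed_path s t A xs \<and> length xs = n. F xs) =
        (\<Sum>((r, c), ys)\<in>Sigma ?P snd. F (concat (replicate r ys)))"
    by (subst sum.reindex_bij_betw[OF bij_betw_prime_cycle_powers_closed_paths, symmetric])
      (simp add: case_prod_beta)
  also have "\<dots> = (\<Sum>(r, c)\<in>?P. \<Sum>ys\<in>c. F (concat (replicate r ys)))"
    unfolding sum.Sigma[OF fin, symmetric] by (simp add: case_prod_beta)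
  finally show ?thesis .
qed

section \<open>Power sums determine a multiset\<close>

definition linear_factors_fps :: "'a::field list \<Rightarrow> 'a fps" where
  "linear_factors_fps xs = (\<Prod>e\<leftarrow>xs. 1 - fps_const e * fps_X)"

definition power_sums_fps :: "'a::field list \<Rightarrow> 'a fps" where
  "power_sums_fps xs = Abs_fps (\<lambda>n. \<Sum>e\<leftarrow>xs. e ^ (n + 1))"

lemma fps_const_eq_linear_factor_times_geometric:
  "fps_const (e::'a::field) = (1 - fps_const e * fps_X) * Abs_fps (\<lambda>n. e ^ (n + 1))"
proof (rule fps_ext)
  fix n
  have "(1 - fps_const e * fps_X) * Abs_fps (\<lambda>n. e ^ (n + 1)) =
        Abs_fps (\<lambda>n. e ^ (n + 1)) - fps_const e * (fps_X * Abs_fps (\<lambda>n. e ^ (n + 1)))"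
    by (simp add: algebra_simps)
  then show "fps_nth (fps_const e) n = fps_nth ((1 - fps_const e * fps_X) * Abs_fps (\<lambda>n. e ^ (n + 1))) n"
    by (cases n) (simp_all add: fps_X_mult_nth)
qed

text \<open>Newton's identities in generating-function form.\<close>

lemma fps_deriv_linear_factors_fps:
  "fps_deriv (linear_factors_fps xs) = - (linear_factors_fps xs * power_sums_fps xs)"
proof (induction xs)
  case Nil
  then show ?case by (simp add: linear_factors_fps_def power_sums_fps_def fps_ext)
next
  case (Cons e xs)
  let ?L = "1 - fps_const e * fps_X" and ?G = "Abs_fps (\<lambda>n. e ^ (n + 1))"
  have S: "power_sums_fps (e # xs) = ?G + power_sums_fps xs"
    unfolding power_sums_fps_def by (simp add: fps_ext)
  have "fps_deriv (linear_factors_fps (e # xs)) =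
        - fps_const e * linear_factors_fps xs + ?L * fps_deriv (linear_factors_fps xs)"
    by (simp add: linear_factors_fps_def)
  also have "\<dots> = - (?L * ?G) * linear_factors_fps xs - ?L * (linear_factors_fps xs * power_sums_fps xs)"
    using Cons fps_const_eq_linear_factor_times_geometric[of e] by simp
  also have "\<dots> = - (linear_factors_fps (e # xs) * power_sums_fps (e # xs))"
    unfolding S by (simp add: linear_factors_fps_def algebra_simps)
  finally show ?case .
qed

lemma fps_nth_linear_factors_fps_0 [simp]: "fps_nth (linear_factors_fps xs) 0 = 1"
  by (induction xs) (simp_all add: linear_factors_fps_def)

lemma fps_nth_linear_factors_fps_eq_0:
  "length xs < k \<Longrightarrow> fps_nth (linear_factors_fps xs) k = 0"
proof (induction xs arbitrary: k)
  case (Cons e xs)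
  have "fps_nth (1 - fps_const e * fps_X) i * fps_nth (linear_factors_fps xs) (k - i) = 0" for i
    using Cons by (cases "i \<le> 1") auto
  then show ?case by (simp add: linear_factors_fps_def fps_mult_nth)
qed (simp add: linear_factors_fps_def)

lemma fps_nth_linear_factors_fps_Suc:
  "of_nat (Suc k) * fps_nth (linear_factors_fps xs) (Suc k) =
     - (\<Sum>i = 0..k. fps_nth (linear_factors_fps xs) i * (\<Sum>e\<leftarrow>xs. e ^ (k - i + 1)))"
proof -
  have "of_nat (Suc k) * fps_nth (linear_factors_fps xs) (Suc k) = fps_nth (fps_deriv (linear_factors_fps xs)) k"
    by (simp add: mult.commute)
  then show ?thesis
    by (simp add: fps_deriv_linear_factors_fps fps_mult_nth power_sums_fps_def)
qed

lemma linear_factors_fps_eq_if_power_sums_eq: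
  fixes es fs :: "'a::field_char_0 list"
  assumes "length es \<le> N" "length fs \<le> N"
    and power_sums: "\<And>k. k \<in> {1..N} \<Longrightarrow> (\<Sum>e\<leftarrow>es. e ^ k) = (\<Sum>e\<leftarrow>fs. e ^ k)"
  shows "linear_factors_fps es = linear_factors_fps fs"
proof (rule fps_ext)
  fix k
  show "fps_nth (linear_factors_fps es) k = fps_nth (linear_factors_fps fs) k"
  proof (induction k rule: less_induct)
    case (less k)
    show ?case
    proof (cases k)
      case (Suc j)
      show ?thesis
      proof (cases "k \<le> N")
        case True
        have "fps_nth (linear_factors_fps es) i * (\<Sum>e\<leftarrow>es. e ^ (j - i + 1)) =
              fps_nth (linear_factors_fps fs) i * (\<Sum>e\<leftarrow>fs. e ^ (j - i + 1))" if "i \<in> {0..j}" for i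
          using less.IH[of i] power_sums[of "j - i + 1"] that Suc True by simp
        then have "(\<Sum>i = 0..j. fps_nth (linear_factors_fps es) i * (\<Sum>e\<leftarrow>es. e ^ (j - i + 1))) =
                   (\<Sum>i = 0..j. fps_nth (linear_factors_fps fs) i * (\<Sum>e\<leftarrow>fs. e ^ (j - i + 1)))"
          by (rule sum.cong[OF refl])
        then have "of_nat (Suc j) * fps_nth (linear_factors_fps es) (Suc j) =
                   of_nat (Suc j) * fps_nth (linear_factors_fps fs) (Suc j)"
          by (simp only: fps_nth_linear_factors_fps_Suc)
        then show ?thesis using Suc by (simp del: of_nat_Suc)
      qed (use assms(1,2) fps_nth_linear_factors_fps_eq_0[of es k] fps_nth_linear_factors_fps_eq_0[of fs k] in simp)
    qed simp
  qed
qed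

lemma linear_factors_fps_eq_fps_of_poly:
  "linear_factors_fps xs = fps_of_poly (\<Prod>e\<leftarrow>xs. [:1, - e:])"
  unfolding linear_factors_fps_def
  by (induction xs) (simp_all add: fps_of_poly_mult fps_of_poly_pCons algebra_simps)

lemma proots_prod_linear_factors: "proots (\<Prod>e\<leftarrow>es. [:- e, 1:]) = mset (es :: 'a::idom list)"
proof (induction es)
  case (Cons e es)
  have "(\<Prod>e\<leftarrow>es. [:- e, 1:]) \<noteq> 0" by (auto simp: prod_list_zero_iff)
  then have "proots ([:- e, 1:] * (\<Prod>e\<leftarrow>es. [:- e, 1:])) = proots [:- e, 1:] + mset es"
    using Cons by (simp add: proots_mult del: mult_pCons_left)
  then show ?case using proots_linear_factor[of "- e"] by simp
qed simp

lemma mset_eq_if_power_sums_eq: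
  fixes es fs :: "'a::field_char_0 list"
  assumes len: "length es = N" "length fs = N"
    and "\<And>k. k \<in> {1..N} \<Longrightarrow> (\<Sum>e\<leftarrow>es. e ^ k) = (\<Sum>e\<leftarrow>fs. e ^ k)"
  shows "mset es = mset fs"
proof -
  let ?P = "\<lambda>xs. (\<Prod>e\<leftarrow>xs. [:- e, 1:]) :: 'a poly"
  have reflect: "reflect_poly (?P xs) = (\<Prod>e\<leftarrow>xs. [:1, - e:])" for xs
  proof -
    have "reflect_poly [:- e, 1:] = [:1, - e:]" for e :: 'a
      by (cases "e = 0") (simp_all add: reflect_poly_def)
    then show ?thesis by (simp add: reflect_poly_prod_list o_def)
  qed
  have "reflect_poly (?P es) = reflect_poly (?P fs)"
    using linear_factors_fps_eq_if_power_sums_eq[of es N fs] assms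
    unfolding reflect linear_factors_fps_eq_fps_of_poly fps_of_poly_eq_iff by simp
  moreover have deg: "degree (?P xs) = length xs" for xs
    using degree_linear_factors[of uminus xs] by simp
  ultimately have "coeff (?P es) j = coeff (?P fs) j" for j
  proof (cases "j \<le> N")
    case True
    have "coeff (?P es) j = coeff (reflect_poly (?P es)) (N - j)"
      using True deg[of es] len by (simp add: coeff_reflect_poly)
    also have "\<dots> = coeff (reflect_poly (?P fs)) (N - j)"
      using \<open>reflect_poly (?P es) = reflect_poly (?P fs)\<close> by simp
    also have "\<dots> = coeff (?P fs) j"
      using True deg[of fs] len by (simp add: coeff_reflect_poly)
    finally show ?thesis .
  qed (use deg len in \<open>simp add: coeff_eq_0\<close>)
  then have "?P es = ?P fs" by (rule poly_eqI)
  then show ?thesis using proots_prod_linear_factors[of es] proots_prod_linear_factors[of fs] by simp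
qed

definition trace_mat :: "'a::comm_ring_1 mat \<Rightarrow> 'a" where
  "trace_mat A = (\<Sum>i = 0..<dim_row A. A $$ (i, i))"

lemma trace_mat_mult_comm:
  assumes "A \<in> carrier_mat n m" and "B \<in> carrier_mat m n"
  shows "trace_mat (A * B) = trace_mat (B * A)"
proof -
  have "trace_mat (A * B) = (\<Sum>i = 0..<n. \<Sum>l = 0..<m. A $$ (i, l) * B $$ (l, i))"
    unfolding trace_mat_def using assms by (simp add: scalar_prod_def)
  also have "\<dots> = (\<Sum>l = 0..<m. \<Sum>i = 0..<n. B $$ (l, i) * A $$ (i, l))"
    by (subst sum.swap) (simp add: mult.commute)
  also have "\<dots> = trace_mat (B * A)"
    unfolding trace_mat_def using assms by (simp add: scalar_prod_def)
  finally show ?thesis .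
qed

lemma upper_triangular_mult:
  fixes A B :: "'a::semiring_0 mat"
  assumes A: "A \<in> carrier_mat n n" "upper_triangular A" and B: "B \<in> carrier_mat n n" "upper_triangular B"
  shows "upper_triangular (A * B)" and "i < n \<Longrightarrow> (A * B) $$ (i, i) = A $$ (i, i) * B $$ (i, i)"
proof -
  have entry: "(A * B) $$ (i, j) = (\<Sum>l = 0..<n. A $$ (i, l) * B $$ (l, j))" if "i < n" "j < n" for i j
    using A B that by (simp add: scalar_prod_def)
  have product_zero: "A $$ (i, l) * B $$ (l, j) = 0" if "i < n" "l < n" "j \<le> i" "l \<noteq> i \<or> j \<noteq> i" for i j l
  proof (cases "l < i")
    case True
    then show ?thesis using A that upper_triangularD[of A] by auto
  next
    case False
    then have "j < l" using that by auto
    then show ?thesis using B that upper_triangularD[of B] by auto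
  qed
  show "upper_triangular (A * B)"
  proof (rule upper_triangularI)
    fix i j assume ij: "j < i" "i < dim_row (A * B)"
    then have "i < n" "j < n" using A by auto
    then show "(A * B) $$ (i, j) = 0"
      unfolding entry[OF \<open>i < n\<close> \<open>j < n\<close>] using ij(1) product_zero by (intro sum.neutral) auto
  qed
  assume i: "i < n"
  have "(\<Sum>l = 0..<n. A $$ (i, l) * B $$ (l, i)) = (\<Sum>l\<in>{i}. A $$ (i, l) * B $$ (l, i))"
    using i product_zero[of i l i for l] by (intro sum.mono_neutral_right) auto
  then show "(A * B) $$ (i, i) = A $$ (i, i) * B $$ (i, i)" using entry[OF i i] by simp
qed

lemma upper_triangular_pow_mat:
  fixes A :: "'a::semiring_1 mat"
  assumes "A \<in> carrier_mat n n" "upper_triangular A"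
  shows "upper_triangular (A ^\<^sub>m k) \<and> (\<forall>i<n. (A ^\<^sub>m k) $$ (i, i) = A $$ (i, i) ^ k)"
proof (induction k)
  case (Suc k)
  then show ?case
    using upper_triangular_mult[OF pow_carrier_mat[OF assms(1)] _ assms] by (simp del: power_Suc add: power_Suc2)
qed (use assms in auto)

lemma trace_pow_mat_eq_power_sum:
  fixes A :: "complex mat"
  assumes A: "A \<in> carrier_mat n n"
  obtains es where "length es = n" "char_poly A = (\<Prod>e\<leftarrow>es. [:- e, 1:])"
    "\<And>k. trace_mat (A ^\<^sub>m k) = (\<Sum>e\<leftarrow>es. e ^ k)"
proof -
  obtain as where as: "char_poly A = (\<Prod>a\<leftarrow>as. [:- a, 1:])"
    using char_poly_factorized[OF A] by blast
  define B where "B = schur_upper_triangular A as"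
  have B: "B \<in> carrier_mat n n" "upper_triangular B" "similar_mat A B"
    using schur_upper_triangular[OF A as] unfolding B_def by auto
  obtain P Q where PQ: "similar_mat_wit A B P Q" using B(3) unfolding similar_mat_def by blast
  then have P: "P \<in> carrier_mat n n" "Q \<in> carrier_mat n n" "Q * P = 1\<^sub>m n"
    using A unfolding similar_mat_wit_def Let_def by auto
  have "trace_mat (A ^\<^sub>m k) = (\<Sum>e\<leftarrow>diag_mat B. e ^ k)" for k
  proof -
    have Bk: "B ^\<^sub>m k \<in> carrier_mat n n" using B(1) by simp
    have "trace_mat (A ^\<^sub>m k) = trace_mat (P * (B ^\<^sub>m k * Q))"
      using similar_mat_wit_pow_id[OF PQ] P Bk by (simp add: assoc_mult_mat[of P n n _ n _ n])
    also have "\<dots> = trace_mat ((B ^\<^sub>m k * Q) * P)"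
      using P Bk by (intro trace_mat_mult_comm[of _ n n]) auto
    also have "(B ^\<^sub>m k * Q) * P = B ^\<^sub>m k"
      using P Bk by (simp add: assoc_mult_mat[of _ n n Q n P n] right_mult_one_mat)
    finally show ?thesis
      using upper_triangular_pow_mat[OF B(1,2), of k] B(1)
      by (simp add: trace_mat_def diag_mat_def sum_list_sum_nth atLeast0LessThan)
  qed
  moreover have "char_poly A = (\<Prod>e\<leftarrow>diag_mat B. [:- e, 1:])"
    using char_poly_similar[OF B(3)] char_poly_upper_triangular[OF B(1,2)] by simp
  moreover have "length (diag_mat B) = n" using B(1) by (simp add: diag_mat_def)
  ultimately show ?thesis using that by blast
qed

definition enum_index :: "nat \<Rightarrow> 'n::finite" where
  "enum_index = (SOME h. bij_betw h {0..<CARD('n)} UNIV)"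

lemma bij_betw_enum_index: "bij_betw (enum_index :: nat \<Rightarrow> 'n::finite) {0..<CARD('n)} UNIV"
proof -
  have "\<exists>h :: nat \<Rightarrow> 'n. bij_betw h {0..<CARD('n)} UNIV"
    using ex_bij_betw_nat_finite[of "UNIV :: 'n set"] by (auto simp: atLeast0LessThan)
  then show ?thesis unfolding enum_index_def by (rule someI_ex)
qed

definition mat_of_vec_mat :: "'a^'n^'n::finite \<Rightarrow> 'a mat" where
  "mat_of_vec_mat X = Matrix.mat CARD('n) CARD('n) (\<lambda>(i, j). X $ enum_index i $ enum_index j)"

lemma mat_of_vec_mat_carrier [simp]: "mat_of_vec_mat X \<in> carrier_mat CARD('n) CARD('n)"
  for X :: "'a^'n^'n::finite"
  by (simp add: mat_of_vec_mat_def)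

lemma det_mat_of_vec_mat: "Determinant.det (mat_of_vec_mat X) = Determinants.det X"
  for X :: "'a::comm_ring_1^'n^'n::finite"
proof -
  let ?n = "CARD('n)" and ?h = "enum_index :: nat \<Rightarrow> 'n"
  let ?g = "inv_into {0..<?n} ?h"
  have h: "bij_betw ?h {0..<?n} UNIV" by (rule bij_betw_enum_index)
  have g: "bij_betw ?g UNIV {0..<?n}" by (rule bij_betw_inv_into[OF h])
  have inj: "inj_on ?h {0..<?n}" using h by (rule bij_betw_imp_inj_on)
  have "Determinant.det (mat_of_vec_mat X) =
        (\<Sum>p | p permutes {0..<?n}. of_int (sign p) * (\<Prod>i = 0..<?n. X $ ?h i $ ?h (p i)))"
    unfolding Determinant.det_def mat_of_vec_mat_def
    by (auto intro!: sum.cong prod.cong simp: permutes_in_image)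
  also have "\<dots> = (\<Sum>q | q permutes (UNIV :: 'n set). of_int (sign q) * (\<Prod>x\<in>UNIV. X $ x $ q x))"
  proof (rule sum.reindex_bij_witness[where j = "map_permutation {0..<?n} ?h"
        and i = "map_permutation UNIV ?g"])
    fix p assume "p \<in> {p. p permutes {0..<?n}}"
    then have p: "p permutes {0..<?n}" by simp
    show "map_permutation UNIV ?g (map_permutation {0..<?n} ?h p) = p"
      using h p by (rule map_permutation_compose_inv) (simp add: inv_into_f_f[OF inj])
    show "map_permutation {0..<?n} ?h p \<in> {q. q permutes UNIV}"
      using map_permutation_permutes[OF h p] by simp
    have "(\<Prod>x\<in>UNIV. X $ x $ map_permutation {0..<?n} ?h p x) = (\<Prod>i = 0..<?n. X $ ?h i $ ?h (p i))"
      using prod.reindex_bij_betw[OF h, of "\<lambda>x. X $ x $ map_permutation {0..<?n} ?h p x"]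
      by (simp add: map_permutation_apply[OF inj])
    then show "of_int (sign (map_permutation {0..<?n} ?h p)) *
                 (\<Prod>x\<in>UNIV. X $ x $ map_permutation {0..<?n} ?h p x) =
               of_int (sign p) * (\<Prod>i = 0..<?n. X $ ?h i $ ?h (p i))"
      using sign_map_permutation[OF inj p] by simp
  next
    fix q assume "q \<in> {q. q permutes (UNIV :: 'n set)}"
    then have q: "q permutes UNIV" by simp
    show "map_permutation {0..<?n} ?h (map_permutation UNIV ?g q) = q"
      using g q by (rule map_permutation_compose_inv) (simp add: f_inv_into_f[of _ ?h] h[unfolded bij_betw_def])
    show "map_permutation UNIV ?g q \<in> {p. p permutes {0..<?n}}"
      using map_permutation_permutes[OF g q] by simp
  qed
  also have "\<dots> = Determinants.det X" unfolding Determinants.det_def by simp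
  finally show ?thesis .
qed

lemma charpoly_mat_eq_char_poly: "charpoly_mat M = char_poly (mat_of_vec_mat M)"
  for M :: "complex^'n^'n::finite"
proof -
  let ?X = "\<chi> i j. (if i = j then [:0, 1:] else 0) - [:M $ i $ j:]"
  have inj: "enum_index i = (enum_index j :: 'n) \<longleftrightarrow> i = j" if "i < CARD('n)" "j < CARD('n)" for i j
    using bij_betw_enum_index[where 'n = 'n] that by (auto simp: bij_betw_def inj_on_def)
  have "mat_of_vec_mat ?X = char_poly_matrix (mat_of_vec_mat M)"
    by (rule eq_matI) (auto simp: char_poly_matrix_def mat_of_vec_mat_def inj)
  then show ?thesis
    unfolding charpoly_mat_def char_poly_def by (simp flip: det_mat_of_vec_mat)
qed

definition power_trace :: "'a::comm_ring_1^'n^'n::finite \<Rightarrow> nat \<Rightarrow> 'a" where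
  "power_trace M k = trace_mat (mat_of_vec_mat M ^\<^sub>m k)"

lemma spectrum_mset_power_sums:
  fixes M :: "complex^'n^'n::finite"
  obtains es where "length es = CARD('n)" "spectrum_mset M = mset es"
    "\<forall>k. power_trace M k = (\<Sum>e\<leftarrow>es. e ^ k)"
proof -
  obtain es where "length es = CARD('n)" "char_poly (mat_of_vec_mat M) = (\<Prod>e\<leftarrow>es. [:- e, 1:])"
    "\<And>k. trace_mat (mat_of_vec_mat M ^\<^sub>m k) = (\<Sum>e\<leftarrow>es. e ^ k)"
    using trace_pow_mat_eq_power_sum[OF mat_of_vec_mat_carrier] by blast
  then show ?thesis
    using that proots_prod_linear_factors[of es]
    by (simp add: spectrum_mset_def charpoly_mat_eq_char_poly power_trace_def)
qed

lemma power_trace_eq_if_spectrum_mset_eq: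
  fixes M1 M2 :: "complex^'n^'n::finite"
  assumes "spectrum_mset M1 = spectrum_mset M2"
  shows "power_trace M1 k = power_trace M2 k"
proof -
  obtain es1 where "length es1 = CARD('n)" "spectrum_mset M1 = mset es1"
    and tr1: "\<forall>k. power_trace M1 k = (\<Sum>e\<leftarrow>es1. e ^ k)"
    by (rule spectrum_mset_power_sums[of M1])
  moreover obtain es2 where "length es2 = CARD('n)" "spectrum_mset M2 = mset es2"
    and tr2: "\<forall>k. power_trace M2 k = (\<Sum>e\<leftarrow>es2. e ^ k)"
    by (rule spectrum_mset_power_sums[of M2])
  ultimately have "mset es1 = mset es2" using assms by simp
  then have "(\<Sum>e\<leftarrow>es1. e ^ k) = (\<Sum>e\<leftarrow>es2. e ^ k)"
    unfolding sum_mset_sum_list[symmetric] by simp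
  then show ?thesis using tr1 tr2 by simp
qed

lemma spectrum_mset_eq_iff_power_trace_eq:
  fixes M1 M2 :: "complex^'n^'n::finite"
  shows "spectrum_mset M1 = spectrum_mset M2 \<longleftrightarrow>
         (\<forall>k\<in>{1..CARD('n)}. power_trace M1 k = power_trace M2 k)"
proof
  assume "spectrum_mset M1 = spectrum_mset M2"
  then show "\<forall>k\<in>{1..CARD('n)}. power_trace M1 k = power_trace M2 k"
    using power_trace_eq_if_spectrum_mset_eq by blast
next
  assume "\<forall>k\<in>{1..CARD('n)}. power_trace M1 k = power_trace M2 k"
  moreover obtain es1 where "length es1 = CARD('n)" "spectrum_mset M1 = mset es1"
    "\<forall>k. power_trace M1 k = (\<Sum>e\<leftarrow>es1. e ^ k)"
    by (rule spectrum_mset_power_sums[of M1])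
  moreover obtain es2 where "length es2 = CARD('n)" "spectrum_mset M2 = mset es2"
    "\<forall>k. power_trace M2 k = (\<Sum>e\<leftarrow>es2. e ^ k)"
    by (rule spectrum_mset_power_sums[of M2])
  ultimately show "spectrum_mset M1 = spectrum_mset M2"
    using mset_eq_if_power_sums_eq[of es1 "CARD('n)" es2] by simp
qed

section \<open>Linear independence of Floquet phases\<close>

lemma inner_int_real_scaleR: "inner_int_real m (t *\<^sub>R w) = t * inner_int_real m w"
  unfolding inner_int_real_def by (simp add: sum_distrib_left algebra_simps)

lemma inner_int_real_add: "inner_int_real (a + b) k = inner_int_real a k + inner_int_real b k"
  unfolding inner_int_real_def by (simp add: sum.distrib distrib_right)

definition floquet_phase :: "real^'d \<Rightarrow> int^'d \<Rightarrow> complex" where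
  "floquet_phase k m = exp (\<i> * complex_of_real (inner_int_real m k))"

lemma floquet_phase_add: "floquet_phase k (a + b) = floquet_phase k a * floquet_phase k b"
  by (simp add: floquet_phase_def inner_int_real_add distrib_left exp_add)

lemma floquet_phase_scale: "floquet_phase k (int r *s m) = floquet_phase k m ^ r"
proof -
  have "inner_int_real (int r *s m) k = real r * inner_int_real m k"
    by (simp add: inner_int_real_def sum_distrib_left algebra_simps)
  then show ?thesis
    unfolding floquet_phase_def exp_of_nat_mult[symmetric] by (simp add: algebra_simps)
qed

lemma floquet_phase_zero [simp]: "floquet_phase 0 m = 1" "floquet_phase k 0 = 1"
  by (simp_all add: floquet_phase_def inner_int_real_def)

text \<open>A separating direction: \<open>m \<mapsto> \<langle>m, (t ^ f i)\<^sub>i\<rangle>\<close> is a polynomial in \<open>t\<close>, nonzero on differences of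
  distinct lattice points, so all but finitely many \<open>t\<close> work.\<close>

lemma exists_inj_on_inner_int_real:
  fixes S :: "(int^'d) set" assumes S: "finite S"
  obtains w :: "real^'d" where "inj_on (\<lambda>m. inner_int_real m w) S"
proof -
  obtain f :: "'d \<Rightarrow> nat" where f: "inj f"
    using finite_imp_inj_to_nat_seg[of "UNIV::'d set"] by auto
  define q where "q m m' = (\<Sum>i\<in>UNIV. monom (real_of_int (m $ i - m' $ i)) (f i))" for m m' :: "int^'d"
  have poly_q: "poly (q m m') t = inner_int_real m (\<chi> i. t ^ f i) - inner_int_real m' (\<chi> i. t ^ f i)"
    for m m' t
    unfolding q_def inner_int_real_def by (simp add: poly_sum poly_monom sum_subtractf algebra_simps)
  have "q m m' \<noteq> 0" if "m \<noteq> m'" for m m'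
  proof
    obtain i0 where i0: "m $ i0 \<noteq> m' $ i0" using \<open>m \<noteq> m'\<close> by (metis Finite_Cartesian_Product.vec_eq_iff)
    assume "q m m' = 0"
    moreover have "coeff (q m m') (f i0) = real_of_int (m $ i0 - m' $ i0)"
    proof -
      have "coeff (q m m') (f i0) = (\<Sum>i\<in>UNIV. if i = i0 then real_of_int (m $ i - m' $ i) else 0)"
        unfolding q_def coeff_sum coeff_monom using f by (intro sum.cong) (auto simp: inj_eq)
      then show ?thesis by simp
    qed
    ultimately show False using i0 by simp
  qed
  then have "finite (\<Union>(m, m')\<in>(S \<times> S) - Id. {t. poly (q m m') t = 0})"
    using S by (intro finite_UN_I) (auto intro: poly_roots_finite)
  then obtain t :: real where t: "t \<notin> (\<Union>(m, m')\<in>(S \<times> S) - Id. {t. poly (q m m') t = 0})"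
    using ex_new_if_finite[OF infinite_UNIV_char_0] by blast
  have "inj_on (\<lambda>m. inner_int_real m (\<chi> i. t ^ f i)) S"
    using t by (intro inj_onI) (auto simp: poly_q)
  then show ?thesis by (rule that)
qed

lemma inj_on_exp_scaled:
  fixes \<alpha> :: "'a \<Rightarrow> real"
  assumes S: "finite S" and inj: "inj_on \<alpha> S"
  obtains \<epsilon> where "inj_on (\<lambda>m. exp (\<i> * complex_of_real (\<epsilon> * \<alpha> m))) S"
proof -
  define D where "D = (\<Sum>m\<in>S. \<Sum>m'\<in>S. \<bar>\<alpha> m - \<alpha> m'\<bar>)"
  have D: "\<bar>\<alpha> m - \<alpha> m'\<bar> \<le> D" if "m \<in> S" "m' \<in> S" for m m'
  proof -
    have "\<bar>\<alpha> m - \<alpha> m'\<bar> \<le> (\<Sum>m'\<in>S. \<bar>\<alpha> m - \<alpha> m'\<bar>)"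
      using that S by (intro member_le_sum) auto
    also have "\<dots> \<le> D"
      unfolding D_def using that S by (intro member_le_sum[where f = "\<lambda>m. \<Sum>m'\<in>S. \<bar>\<alpha> m - \<alpha> m'\<bar>"] sum_nonneg) auto
    finally show ?thesis .
  qed
  have D0: "0 \<le> D" unfolding D_def by (auto intro: sum_nonneg)
  define \<epsilon> where "\<epsilon> = 1 / (D + 1)"
  have "m = m'" if mm: "m \<in> S" "m' \<in> S"
    and eq: "exp (\<i> * complex_of_real (\<epsilon> * \<alpha> m)) = exp (\<i> * complex_of_real (\<epsilon> * \<alpha> m'))" for m m'
  proof -
    have "exp (\<i> * complex_of_real (\<epsilon> * (\<alpha> m - \<alpha> m'))) = 1"
      using eq by (simp add: right_diff_distrib exp_diff)
    then obtain j :: int where j: "\<epsilon> * (\<alpha> m - \<alpha> m') = of_int (2 * j) * pi"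
      unfolding exp_eq_1 by auto
    have "\<bar>\<epsilon> * (\<alpha> m - \<alpha> m')\<bar> < 1"
      using D[OF mm] D0 by (simp add: \<epsilon>_def abs_mult)
    have "j = 0"
    proof (rule ccontr)
      assume "j \<noteq> 0"
      then have "2 * pi \<le> \<bar>of_int (2 * j) * pi\<bar>" by (simp add: abs_mult)
      then show False using \<open>\<bar>\<epsilon> * (\<alpha> m - \<alpha> m')\<bar> < 1\<close> j pi_gt3 by simp
    qed
    then show "m = m'" using j inj mm D0 by (auto simp: \<epsilon>_def inj_on_def)
  qed
  then have "inj_on (\<lambda>m. exp (\<i> * complex_of_real (\<epsilon> * \<alpha> m))) S" by (rule inj_onI)
  then show ?thesis by (rule that)
qed

lemma coeffs_eq_zero_if_power_sums_eq_zero: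
  fixes c z :: "'a \<Rightarrow> 'b::field"
  assumes S: "finite S" and inj: "inj_on z S" and sums: "\<And>N. (\<Sum>m\<in>S. c m * z m ^ N) = 0"
    and m0: "m0 \<in> S"
  shows "c m0 = 0"
proof -
  define p where "p = (\<Prod>m\<in>S - {m0}. [:- z m, 1:])"
  have poly_p: "poly p x = (\<Prod>m\<in>S - {m0}. x - z m)" for x
    unfolding p_def by (simp add: poly_prod)
  have "(\<Sum>m\<in>S. c m * poly p (z m)) = (\<Sum>m\<in>S. \<Sum>i\<le>degree p. coeff p i * (c m * z m ^ i))"
    by (simp add: poly_altdef sum_distrib_left algebra_simps)
  also have "\<dots> = (\<Sum>i\<le>degree p. coeff p i * (\<Sum>m\<in>S. c m * z m ^ i))"
    by (subst sum.swap) (simp add: sum_distrib_left)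
  also have "\<dots> = 0" using sums by simp
  finally have "(\<Sum>m\<in>S. c m * poly p (z m)) = 0" .
  moreover have "(\<Sum>m\<in>S - {m0}. c m * poly p (z m)) = 0"
    using S by (intro sum.neutral) (auto simp: poly_p intro!: prod_zero)
  then have "(\<Sum>m\<in>S. c m * poly p (z m)) = c m0 * poly p (z m0)"
    using S m0 by (simp add: sum.remove)
  moreover have "poly p (z m0) \<noteq> 0"
    using S m0 inj by (auto simp: poly_p prod_zero_iff inj_on_def)
  ultimately show ?thesis by simp
qed

lemma floquet_phase_sum_eq_zero_imp_coeffs_eq_zero:
  fixes S :: "(int^'d) set" and c :: "int^'d \<Rightarrow> complex"
  assumes S: "finite S" and sums: "\<And>k. (\<Sum>m\<in>S. c m * floquet_phase k m) = 0" and m: "m \<in> S"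
  shows "c m = 0"
proof -
  obtain w :: "real^'d" where "inj_on (\<lambda>m. inner_int_real m w) S"
    using exists_inj_on_inner_int_real[OF S] by blast
  then obtain \<epsilon> where inj: "inj_on (\<lambda>m. exp (\<i> * complex_of_real (\<epsilon> * inner_int_real m w))) S"
    using inj_on_exp_scaled[OF S] by blast
  have "floquet_phase ((real N * \<epsilon>) *\<^sub>R w) m = exp (\<i> * complex_of_real (\<epsilon> * inner_int_real m w)) ^ N"
    for m N
    unfolding floquet_phase_def inner_int_real_scaleR exp_of_nat_mult[symmetric] by (simp add: algebra_simps)
  then have "(\<Sum>m\<in>S. c m * exp (\<i> * complex_of_real (\<epsilon> * inner_int_real m w)) ^ N) = 0" for N
    using sums[of "(real N * \<epsilon>) *\<^sub>R w"] by simp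
  then show ?thesis using coeffs_eq_zero_if_power_sums_eq_zero[OF S inj _ m] by blast
qed

lemma is_walk_Nil [simp]: "is_walk s t A v [] u \<longleftrightarrow> v = u"
  by (simp add: is_walk_def)

lemma is_walk_Cons [simp]:
  "is_walk s t A v (a # xs) u \<longleftrightarrow> a \<in> A \<and> s a = v \<and> is_walk s t A (t a) xs u"
  by (cases xs) (auto simp: is_walk_def All_less_Suc2 less_Suc_eq_0_disj)

lemma is_walk_snoc:
  "is_walk s t A v (xs @ [a]) u \<longleftrightarrow> is_walk s t A v xs (s a) \<and> a \<in> A \<and> t a = u"
  by (induction xs arbitrary: v) auto

lemma closed_path_iff_is_walk:
  "closed_path s t A xs \<longleftrightarrow> xs \<noteq> [] \<and> is_walk s t A (s (hd xs)) xs (s (hd xs))"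
proof (cases "xs = []")
  case False
  let ?n = "length xs"
  have "(\<forall>j<?n. t (xs ! j) = s (xs ! (Suc j mod ?n))) \<longleftrightarrow>
        t (last xs) = s (hd xs) \<and> (\<forall>j. Suc j < ?n \<longrightarrow> t (xs ! j) = s (xs ! Suc j))"
  proof (intro iffI conjI allI impI)
    assume "\<forall>j<?n. t (xs ! j) = s (xs ! (Suc j mod ?n))"
    then show "t (last xs) = s (hd xs)"
      using spec[of _ "?n - 1"] False by (simp add: last_conv_nth hd_conv_nth)
    show "t (xs ! j) = s (xs ! Suc j)" if "Suc j < ?n" for j
      using \<open>\<forall>j<?n. _\<close> that by (metis Suc_lessD mod_less)
  next
    fix j assume *: "t (last xs) = s (hd xs) \<and> (\<forall>j. Suc j < ?n \<longrightarrow> t (xs ! j) = s (xs ! Suc j))"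
      and "j < ?n"
    show "t (xs ! j) = s (xs ! (Suc j mod ?n))"
    proof (cases "Suc j < ?n")
      case False
      then have "j = ?n - 1" using \<open>j < ?n\<close> by simp
      then show ?thesis using * \<open>xs \<noteq> []\<close> by (simp add: last_conv_nth hd_conv_nth)
    qed (use * in simp)
  qed
  then show ?thesis using False by (auto simp: closed_path_def is_walk_def)
qed (simp add: closed_path_def)

lemma is_walk_butlast_last:
  "ys \<noteq> [] \<Longrightarrow> is_walk s t A v ys u \<longleftrightarrow>
     is_walk s t A v (butlast ys) (s (last ys)) \<and> last ys \<in> A \<and> t (last ys) = u"
  using is_walk_snoc[of s t A v "butlast ys" "last ys" u] by simp

definition weighted_adjacency ::
  "('a \<Rightarrow> 'n) \<Rightarrow> ('a \<Rightarrow> 'n) \<Rightarrow> 'a set \<Rightarrow> ('a \<Rightarrow> 'b::comm_monoid_add) \<Rightarrow> 'b^'n^'n" where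
  "weighted_adjacency s t A w = (\<chi> v u. \<Sum>a | a \<in> A \<and> s a = v \<and> t a = u. w a)"

lemma finite_walks: "finite A \<Longrightarrow> finite {xs. is_walk s t A v xs u \<and> length xs = k}"
  by (rule finite_subset[OF _ finite_lists_length_eq[of A k]]) (auto simp: is_walk_def split: if_splits)

lemma is_walk_hd: "is_walk s t A v xs u \<Longrightarrow> xs \<noteq> [] \<Longrightarrow> s (hd xs) = v"
  by (simp add: is_walk_def)

lemma sum_walks_Suc_last:
  fixes w :: "'a \<Rightarrow> 'b::comm_semiring_1"
  assumes "finite A"
  shows "(\<Sum>ys \<in> {ys \<in> {ys. is_walk s t A v ys u \<and> length ys = Suc k}. s (last ys) = x}.
            prod_list (map w ys)) =
         (\<Sum>xs | is_walk s t A v xs x \<and> length xs = k. prod_list (map w xs)) *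
         (\<Sum>a | a \<in> A \<and> s a = x \<and> t a = u. w a)"
proof -
  have ne: "length ys = Suc k \<Longrightarrow> ys \<noteq> []" for ys :: "'a list" by auto
  let ?W = "{xs. is_walk s t A v xs x \<and> length xs = k}" and ?B = "{a. a \<in> A \<and> s a = x \<and> t a = u}"
  have "(\<Sum>xs\<in>?W. prod_list (map w xs)) * (\<Sum>a\<in>?B. w a) = (\<Sum>(xs, a)\<in>?W \<times> ?B. prod_list (map w xs) * w a)"
    by (simp add: sum_product sum.cartesian_product)
  also have "\<dots> = (\<Sum>ys \<in> {ys \<in> {ys. is_walk s t A v ys u \<and> length ys = Suc k}. s (last ys) = x}.
                       prod_list (map w ys))"
    by (rule sum.reindex_bij_witness[where j = "\<lambda>(xs, a). xs @ [a]" and i = "\<lambda>ys. (butlast ys, last ys)"])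
      (auto simp: is_walk_snoc is_walk_butlast_last ne)
  finally show ?thesis ..
qed

lemma pow_weighted_adjacency_entry:
  fixes s t :: "'a \<Rightarrow> 'n::finite" and w :: "'a \<Rightarrow> 'b::comm_ring_1"
  assumes A: "finite A" and i: "i < CARD('n)" and j: "j < CARD('n)"
  shows "(mat_of_vec_mat (weighted_adjacency s t A w) ^\<^sub>m k) $$ (i, j) =
         (\<Sum>xs | is_walk s t A (enum_index i) xs (enum_index j) \<and> length xs = k. prod_list (map w xs))"
  using j
proof (induction k arbitrary: j)
  case 0
  have "enum_index i = (enum_index j :: 'n) \<longleftrightarrow> i = j"
    using bij_betw_enum_index[where 'n = 'n] i 0 by (auto simp: bij_betw_def inj_on_def)
  then have "{xs. is_walk s t A (enum_index i) xs (enum_index j :: 'n) \<and> length xs = 0} =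
             (if i = j then {[]} else {})"
    by auto
  then show ?case using i 0 by (simp add: mat_of_vec_mat_def)
next
  case (Suc k)
  let ?M = "mat_of_vec_mat (weighted_adjacency s t A w)" and ?h = "enum_index :: nat \<Rightarrow> 'n"
  let ?walks = "\<lambda>v k. \<Sum>xs | is_walk s t A (?h i) xs v \<and> length xs = k. prod_list (map w xs)"
  have "(?M ^\<^sub>m Suc k) $$ (i, j) = (\<Sum>l = 0..<CARD('n). (?M ^\<^sub>m k) $$ (i, l) * ?M $$ (l, j))"
    using i Suc.prems by (simp add: scalar_prod_def mat_of_vec_mat_def)
  also have "\<dots> = (\<Sum>l = 0..<CARD('n). ?walks (?h l) k * weighted_adjacency s t A w $ ?h l $ ?h j)"
    using Suc by (intro sum.cong) (auto simp: mat_of_vec_mat_def)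
  also have "\<dots> = (\<Sum>x\<in>UNIV. ?walks x k * weighted_adjacency s t A w $ x $ ?h j)"
    by (rule sum.reindex_bij_betw[OF bij_betw_enum_index])
  also have "\<dots> = (\<Sum>x\<in>UNIV. \<Sum>ys \<in> {ys \<in> {ys. is_walk s t A (?h i) ys (?h j) \<and> length ys = Suc k}.
                       s (last ys) = x}. prod_list (map w ys))"
    unfolding weighted_adjacency_def vec_lambda_beta by (simp only: sum_walks_Suc_last[OF A])
  also have "\<dots> = ?walks (?h j) (Suc k)"
    by (rule sum.group) (simp_all add: finite_walks[OF A])
  finally show ?case .
qed

lemma power_trace_weighted_adjacency:
  fixes s t :: "'a \<Rightarrow> 'n::finite" and w :: "'a \<Rightarrow> 'b::comm_ring_1"
  assumes A: "finite A" and k: "0 < k"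
  shows "power_trace (weighted_adjacency s t A w) k =
         (\<Sum>xs | closed_path s t A xs \<and> length xs = k. prod_list (map w xs))"
proof -
  let ?h = "enum_index :: nat \<Rightarrow> 'n" and ?C = "{xs. closed_path s t A xs \<and> length xs = k}"
  let ?walks = "\<lambda>v. \<Sum>xs | is_walk s t A v xs v \<and> length xs = k. prod_list (map w xs)"
  have "power_trace (weighted_adjacency s t A w) k = (\<Sum>i = 0..<CARD('n). ?walks (?h i))"
    unfolding power_trace_def trace_mat_def
    by (intro sum.cong refl pow_weighted_adjacency_entry[OF A]) (auto simp: mat_of_vec_mat_def)
  also have "\<dots> = (\<Sum>v\<in>UNIV. ?walks v)"
    by (rule sum.reindex_bij_betw[OF bij_betw_enum_index])
  also have "\<dots> = (\<Sum>v\<in>UNIV. \<Sum>xs | xs \<in> ?C \<and> s (hd xs) = v. prod_list (map w xs))"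
    using k by (intro sum.cong refl arg_cong[where f = "\<lambda>X. sum _ X"])
      (auto simp: closed_path_iff_is_walk dest: is_walk_hd)
  also have "\<dots> = (\<Sum>xs\<in>?C. prod_list (map w xs))"
    by (rule sum.group)
      (auto intro: finite_subset[OF _ finite_lists_length_eq[OF A]] simp: closed_path_def)
  finally show ?thesis .
qed

section \<open>Traces of Floquet operators as sums over prime cycles\<close>

definition floquet_arc_weight ::
  "('e \<Rightarrow> int^'d) \<Rightarrow> ('v \<Rightarrow> complex) \<Rightarrow> real^'d \<Rightarrow> 'e + 'v \<Rightarrow> complex" where
  "floquet_arc_weight \<tau> Q k a = mweight Q a * floquet_phase k (mtau \<tau> a)"

lemma floquet_matrix_eq_weighted_adjacency:
  fixes src tgt :: "'e \<Rightarrow> 'v::finite"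
  assumes "finite E"
  shows "floquet_matrix E src tgt \<tau> Q k =
         weighted_adjacency (msrc src) (mtgt tgt) (marcs E) (floquet_arc_weight \<tau> Q k)"
proof -
  have "(\<Sum>a | a \<in> marcs E \<and> msrc src a = v \<and> mtgt tgt a = u. floquet_arc_weight \<tau> Q k a) =
        (\<Sum>e | e \<in> E \<and> src e = v \<and> tgt e = u. floquet_phase k (\<tau> e)) + (if v = u then Q v else 0)"
    for v u
  proof -
    have arcs: "{a \<in> marcs E. msrc src a = v \<and> mtgt tgt a = u} =
          Inl ` {e \<in> E. src e = v \<and> tgt e = u} \<union> Inr ` (if v = u then {v} else {})"
    proof (rule Set.set_eqI)
      fix a show "a \<in> {a \<in> marcs E. msrc src a = v \<and> mtgt tgt a = u} \<longleftrightarrow>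
                  a \<in> Inl ` {e \<in> E. src e = v \<and> tgt e = u} \<union> Inr ` (if v = u then {v} else {})"
        by (cases a) (auto simp: marcs_def msrc_def mtgt_def)
    qed
    have "(\<Sum>a | a \<in> marcs E \<and> msrc src a = v \<and> mtgt tgt a = u. floquet_arc_weight \<tau> Q k a) =
        (\<Sum>a\<in>Inl ` {e \<in> E. src e = v \<and> tgt e = u}. floquet_arc_weight \<tau> Q k a) +
        (\<Sum>a\<in>Inr ` (if v = u then {v} else {}). floquet_arc_weight \<tau> Q k a)"
      unfolding arcs by (rule sum.union_disjoint) (use assms in auto)
    also have "(\<Sum>a\<in>Inl ` {e \<in> E. src e = v \<and> tgt e = u}. floquet_arc_weight \<tau> Q k a) =
               (\<Sum>e | e \<in> E \<and> src e = v \<and> tgt e = u. floquet_phase k (\<tau> e))"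
      by (simp add: sum.reindex floquet_arc_weight_def mweight_def mtau_def)
    also have "(\<Sum>a\<in>Inr ` (if v = u then {v} else {}). floquet_arc_weight \<tau> Q k a) = (if v = u then Q v else 0)"
      by (cases "v = u") (simp_all add: floquet_arc_weight_def mweight_def mtau_def)
    finally show ?thesis .
  qed
  then show ?thesis
    unfolding floquet_matrix_def weighted_adjacency_def floquet_phase_def
    by (simp add: Finite_Cartesian_Product.vec_eq_iff)
qed

lemma prod_list_floquet_arc_weight:
  "prod_list (map (floquet_arc_weight \<tau> Q k) xs) =
   prod_list (map (mweight Q) xs) * floquet_phase k (sum_list (map (mtau \<tau>) xs))"
  by (induction xs) (simp_all add: floquet_arc_weight_def floquet_phase_add ac_simps)

lemma cycle_weight_floquet_arc_weight:
  "cycle_weight (floquet_arc_weight \<tau> Q k) c =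
   cycle_weight (mweight Q) c * floquet_phase k (cycle_index (mtau \<tau>) c)"
  unfolding cycle_weight_def cycle_index_def by (rule prod_list_floquet_arc_weight)

abbreviation floquet_cycle_powers ::
  "'e set \<Rightarrow> ('e \<Rightarrow> 'v) \<Rightarrow> ('e \<Rightarrow> 'v) \<Rightarrow> nat \<Rightarrow> (nat \<times> ('e + 'v) list set) set" where
  "floquet_cycle_powers E src tgt n \<equiv> prime_cycle_powers (msrc src) (mtgt tgt) (marcs E) n"

lemma power_trace_floquet_matrix_eq_sum_cycle_powers:
  fixes src tgt :: "'e \<Rightarrow> 'v::finite"
  assumes E: "finite E" and n: "0 < n"
  shows "power_trace (floquet_matrix E src tgt \<tau> Q k) n =
         of_nat n * (\<Sum>(r, c)\<in>floquet_cycle_powers E src tgt n.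
           floquet_phase k (int r *s cycle_index (mtau \<tau>) c) * ((1 / of_nat r) * cycle_weight (mweight Q) c ^ r))"
proof -
  have A: "finite (marcs E :: ('e + 'v) set)" using E by (simp add: marcs_def)
  have "power_trace (floquet_matrix E src tgt \<tau> Q k) n =
        (\<Sum>xs | closed_path (msrc src) (mtgt tgt) (marcs E) xs \<and> length xs = n.
           prod_list (map (floquet_arc_weight \<tau> Q k) xs))"
    by (simp add: floquet_matrix_eq_weighted_adjacency[OF E] power_trace_weighted_adjacency[OF A n])
  also have "\<dots> = (\<Sum>(r, c)\<in>floquet_cycle_powers E src tgt n.
                    \<Sum>ys\<in>c. prod_list (map (floquet_arc_weight \<tau> Q k) (concat (replicate r ys))))"
    by (rule sum_closed_paths_eq_sum_prime_cycle_powers[OF A])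
  also have "\<dots> = (\<Sum>(r, c)\<in>floquet_cycle_powers E src tgt n. of_nat n *
      (floquet_phase k (int r *s cycle_index (mtau \<tau>) c) * ((1 / of_nat r) * cycle_weight (mweight Q) c ^ r)))"
  proof (rule sum.cong[OF refl], clarify)
    fix r c assume "(r, c) \<in> floquet_cycle_powers E src tgt n"
    then have c: "c \<in> prime_cycles (msrc src) (mtgt tgt) (marcs E)" and r: "0 < r"
      and rc: "r * cycle_len c = n"
      by (auto simp: prime_cycle_powers_def)
    have "(\<Sum>ys\<in>c. prod_list (map (floquet_arc_weight \<tau> Q k) (concat (replicate r ys)))) =
          (\<Sum>ys\<in>c. cycle_weight (floquet_arc_weight \<tau> Q k) c ^ r)"
      by (rule sum.cong) (simp_all add: prod_list_concat_replicate cycle_weight_eq[OF c])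
    also have "\<dots> = of_nat (card c) * cycle_weight (floquet_arc_weight \<tau> Q k) c ^ r" by simp
    also have "\<dots> = of_nat n * (floquet_phase k (int r *s cycle_index (mtau \<tau>) c) *
                      ((1 / of_nat r) * cycle_weight (mweight Q) c ^ r))"
      using r rc[symmetric] card_prime_cycle[OF c]
      by (simp add: cycle_weight_floquet_arc_weight floquet_phase_scale power_mult_distrib field_simps)
    finally show "(\<Sum>ys\<in>c. prod_list (map (floquet_arc_weight \<tau> Q k) (concat (replicate r ys)))) =
      of_nat n * (floquet_phase k (int r *s cycle_index (mtau \<tau>) c) * ((1 / of_nat r) * cycle_weight (mweight Q) c ^ r))" .
  qed
  finally show ?thesis by (simp add: sum_distrib_left case_prod_beta)
qed

lemma cycle_weight_eq_1_if_not_new: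
  assumes "c \<in> prime_cycles (msrc src) (mtgt tgt) (marcs E)" and "c \<notin> new_prime_cycles E src tgt"
  shows "cycle_weight (mweight Q) c = 1"
proof -
  obtain c0 where "c = map Inl ` c0" using assms unfolding new_prime_cycles_def by blast
  then obtain ys where "cycle_rep c = map Inl ys" using cycle_rep_in_prime_cycle[OF assms(1)] by blast
  moreover have "prod_list (map (mweight Q) (map Inl ys)) = 1"
    by (induction ys) (simp_all add: mweight_def)
  ultimately show ?thesis unfolding cycle_weight_def by simp
qed

text \<open>The prime cycles of \<open>\<G>\<^sub>*\<close> itself carry weight 1, so their contribution to the traces does not
  depend on \<open>Q\<close>.\<close>

definition old_cycles_term ::
  "'e set \<Rightarrow> ('e \<Rightarrow> 'v) \<Rightarrow> ('e \<Rightarrow> 'v) \<Rightarrow> nat \<Rightarrow> (nat \<times> ('e + 'v) list set \<Rightarrow> bool) \<Rightarrow> complex" where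
  "old_cycles_term E src tgt n R =
     (\<Sum>(r, c)\<in>{x \<in> floquet_cycle_powers E src tgt n. R x \<and> snd x \<notin> new_prime_cycles E src tgt}.
        1 / of_nat r)"

lemma sum_floquet_cycle_powers_split:
  fixes src tgt :: "'e \<Rightarrow> 'v::finite"
  assumes "finite E"
  shows "(\<Sum>(r, c)\<in>{x \<in> floquet_cycle_powers E src tgt n. R x}. (1 / of_nat r) * cycle_weight (mweight Q) c ^ r) =
         (\<Sum>(r, c)\<in>{x \<in> floquet_cycle_powers E src tgt n. R x \<and> snd x \<in> new_prime_cycles E src tgt}.
            (1 / of_nat r) * cycle_weight (mweight Q) c ^ r) + old_cycles_term E src tgt n R"
proof -
  let ?X = "{x \<in> floquet_cycle_powers E src tgt n. R x}" and ?new = "{x. snd x \<in> new_prime_cycles E src tgt}"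
  let ?f = "\<lambda>(r, c). (1 / of_nat r) * cycle_weight (mweight Q) c ^ r"
  have fin: "finite ?X"
    by (rule finite_subset[OF _ finite_prime_cycle_powers]) (auto simp: marcs_def assms)
  have "sum ?f ?X = sum ?f (?X \<inter> ?new) + sum ?f (?X - ?new)"
    by (rule sum.Int_Diff[OF fin])
  also have "?X \<inter> ?new = {x \<in> floquet_cycle_powers E src tgt n. R x \<and> snd x \<in> new_prime_cycles E src tgt}"
    by auto
  also have "sum ?f (?X - ?new) = old_cycles_term E src tgt n R"
    unfolding old_cycles_term_def
    by (intro sum.cong) (auto simp: prime_cycle_powers_def cycle_weight_eq_1_if_not_new)
  finally show ?thesis .
qed

definition floquet_cycle_indices ::
  "'e set \<Rightarrow> ('e \<Rightarrow> 'v) \<Rightarrow> ('e \<Rightarrow> 'v) \<Rightarrow> ('e \<Rightarrow> int^'d) \<Rightarrow> nat \<Rightarrow> (int^'d) set" where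
  "floquet_cycle_indices E src tgt \<tau> n =
     (\<lambda>(r, c). int r *s cycle_index (mtau \<tau>) c) ` floquet_cycle_powers E src tgt n"

lemma inv_I_nm_eq:
  "inv_I_nm E src tgt \<tau> n m Q =
   (\<Sum>(r, c)\<in>{x \<in> floquet_cycle_powers E src tgt n. (case x of (r, c) \<Rightarrow> int r *s cycle_index (mtau \<tau>) c) = m \<and>
               snd x \<in> new_prime_cycles E src tgt}. (1 / of_nat r) * cycle_weight (mweight Q) c ^ r)"
  unfolding inv_I_nm_def prime_cycle_powers_def new_prime_cycles_def
  by (rule arg_cong[where f = "\<lambda>X. sum _ X"]) auto

lemma inv_I_nm_eq_0:
  "m \<notin> floquet_cycle_indices E src tgt \<tau> n \<Longrightarrow> inv_I_nm E src tgt \<tau> n m Q = 0"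
  unfolding inv_I_nm_eq floquet_cycle_indices_def by (intro sum.neutral) force

lemma inv_I_n_eq:
  "inv_I_n E src tgt n Q =
   (\<Sum>(r, c)\<in>{x \<in> floquet_cycle_powers E src tgt n. True \<and> snd x \<in> new_prime_cycles E src tgt}.
      (1 / of_nat r) * cycle_weight (mweight Q) c ^ r)"
  unfolding inv_I_n_def prime_cycle_powers_def new_prime_cycles_def
  by (rule arg_cong[where f = "\<lambda>X. sum _ X"]) auto

lemma power_trace_floquet_matrix_eq_invariants:
  fixes src tgt :: "'e \<Rightarrow> 'v::finite"
  assumes E: "finite E" and n: "0 < n"
  shows "power_trace (floquet_matrix E src tgt \<tau> Q k) n =
         of_nat n * (\<Sum>m\<in>floquet_cycle_indices E src tgt \<tau> n. floquet_phase k m *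
           (inv_I_nm E src tgt \<tau> n m Q +
            old_cycles_term E src tgt n (\<lambda>x. (case x of (r, c) \<Rightarrow> int r *s cycle_index (mtau \<tau>) c) = m)))"
proof -
  let ?P = "floquet_cycle_powers E src tgt n" and ?g = "\<lambda>(r, c). int r *s cycle_index (mtau \<tau>) c"
  let ?f = "\<lambda>(r, c). (1 / of_nat r) * cycle_weight (mweight Q) c ^ r"
  have fin: "finite ?P" by (rule finite_prime_cycle_powers) (simp add: marcs_def E)
  have "(\<Sum>x\<in>?P. floquet_phase k (?g x) * ?f x) =
        (\<Sum>m\<in>?g ` ?P. \<Sum>x\<in>{x \<in> ?P. ?g x = m}. floquet_phase k (?g x) * ?f x)"
    by (rule sum.image_gen[OF fin])
  also have "\<dots> = (\<Sum>m\<in>?g ` ?P. floquet_phase k m * sum ?f {x \<in> ?P. ?g x = m})"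
    by (simp add: sum_distrib_left)
  also have "\<dots> = (\<Sum>m\<in>?g ` ?P. floquet_phase k m *
      (inv_I_nm E src tgt \<tau> n m Q + old_cycles_term E src tgt n (\<lambda>x. ?g x = m)))"
  proof -
    have "sum ?f {x \<in> ?P. ?g x = m} =
          inv_I_nm E src tgt \<tau> n m Q + old_cycles_term E src tgt n (\<lambda>x. ?g x = m)" for m
      unfolding inv_I_nm_eq by (rule sum_floquet_cycle_powers_split[OF E])
    then show ?thesis by (simp only:)
  qed
  finally show ?thesis
    unfolding power_trace_floquet_matrix_eq_sum_cycle_powers[OF E n] floquet_cycle_indices_def
    by (simp add: case_prod_beta)
qed

lemma power_trace_floquet_matrix_0_eq_invariant:
  fixes src tgt :: "'e \<Rightarrow> 'v::finite"
  assumes E: "finite E" and n: "0 < n"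
  shows "power_trace (floquet_matrix E src tgt \<tau> Q 0) n =
         of_nat n * (inv_I_n E src tgt n Q + old_cycles_term E src tgt n (\<lambda>_. True))"
proof -
  let ?P = "floquet_cycle_powers E src tgt n"
  let ?f = "\<lambda>(r, c). (1 / of_nat r) * cycle_weight (mweight Q) c ^ r"
  have "sum ?f {x \<in> ?P. True} = inv_I_n E src tgt n Q + old_cycles_term E src tgt n (\<lambda>_. True)"
    unfolding inv_I_n_eq by (rule sum_floquet_cycle_powers_split[OF E])
  then show ?thesis
    unfolding power_trace_floquet_matrix_eq_sum_cycle_powers[OF E n] floquet_phase_zero mult_1 by simp
qed

lemma finite_floquet_cycle_indices:
  fixes src tgt :: "'e \<Rightarrow> 'v::finite"
  shows "finite E \<Longrightarrow> finite (floquet_cycle_indices E src tgt \<tau> n)"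
  unfolding floquet_cycle_indices_def by (intro finite_imageI finite_prime_cycle_powers) (simp add: marcs_def)

lemma floquet_power_traces_eq_iff_invariants_eq:
  fixes src tgt :: "'e \<Rightarrow> 'v::finite" and \<tau> :: "'e \<Rightarrow> int^'d"
  assumes E: "finite E" and n: "0 < n"
  shows "(\<forall>k. power_trace (floquet_matrix E src tgt \<tau> Q1 k) n = power_trace (floquet_matrix E src tgt \<tau> Q2 k) n)
         \<longleftrightarrow> (\<forall>m. inv_I_nm E src tgt \<tau> n m Q1 = inv_I_nm E src tgt \<tau> n m Q2)"
proof
  let ?S = "floquet_cycle_indices E src tgt \<tau> n"
  let ?old = "\<lambda>m. old_cycles_term E src tgt n (\<lambda>x. (case x of (r, c) \<Rightarrow> int r *s cycle_index (mtau \<tau>) c) = m)"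
  let ?c = "\<lambda>m. of_nat n * (inv_I_nm E src tgt \<tau> n m Q1 + ?old m) - of_nat n * (inv_I_nm E src tgt \<tau> n m Q2 + ?old m)"
  assume traces: "\<forall>k. power_trace (floquet_matrix E src tgt \<tau> Q1 k) n = power_trace (floquet_matrix E src tgt \<tau> Q2 k) n"
  have sums: "(\<Sum>m\<in>?S. ?c m * floquet_phase k m) = 0" for k
    using traces[rule_format, of k] unfolding power_trace_floquet_matrix_eq_invariants[OF E n]
    by (simp add: sum_subtractf sum_distrib_left algebra_simps)
  have "?c m = 0" if "m \<in> ?S" for m
    by (rule floquet_phase_sum_eq_zero_imp_coeffs_eq_zero[OF finite_floquet_cycle_indices[OF E] sums that])
  show "\<forall>m. inv_I_nm E src tgt \<tau> n m Q1 = inv_I_nm E src tgt \<tau> n m Q2"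
  proof
    fix m show "inv_I_nm E src tgt \<tau> n m Q1 = inv_I_nm E src tgt \<tau> n m Q2"
    proof (cases "m \<in> ?S")
      case True
      then have "of_nat n * (inv_I_nm E src tgt \<tau> n m Q1 + ?old m) =
                 of_nat n * (inv_I_nm E src tgt \<tau> n m Q2 + ?old m)"
        using \<open>\<And>m. m \<in> ?S \<Longrightarrow> ?c m = 0\<close> by simp
      then show ?thesis using n by simp
    qed (simp add: inv_I_nm_eq_0)
  qed
qed (simp add: power_trace_floquet_matrix_eq_invariants[OF E n])

lemma periodic_power_trace_eq_iff_invariant_eq:
  fixes src tgt :: "'e \<Rightarrow> 'v::finite" and \<tau> :: "'e \<Rightarrow> int^'d"
  assumes "finite E" and "0 < n"
  shows "power_trace (floquet_matrix E src tgt \<tau> Q1 0) n = power_trace (floquet_matrix E src tgt \<tau> Q2 0) n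
         \<longleftrightarrow> inv_I_n E src tgt n Q1 = inv_I_n E src tgt n Q2"
  using assms by (simp add: power_trace_floquet_matrix_0_eq_invariant)

lemma same_floquet_spectrum_iff_power_traces_eq:
  fixes src tgt :: "'e \<Rightarrow> 'v::finite"
  shows "same_floquet_spectrum E src tgt \<tau> Q1 Q2 \<longleftrightarrow>
         (\<forall>n\<in>{1..CARD('v)}. \<forall>k. power_trace (floquet_matrix E src tgt \<tau> Q1 k) n =
                                    power_trace (floquet_matrix E src tgt \<tau> Q2 k) n)"
  unfolding same_floquet_spectrum_def spectrum_mset_eq_iff_power_trace_eq by blast

lemma same_floquet_spectrum_iff_invariants_eq:
  fixes src tgt :: "'e \<Rightarrow> 'v::finite"
  assumes "finite E"
  shows "same_floquet_spectrum E src tgt \<tau> Q1 Q2 \<longleftrightarrow>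
         (\<forall>n\<in>{1..CARD('v)}. \<forall>m. inv_I_nm E src tgt \<tau> n m Q1 = inv_I_nm E src tgt \<tau> n m Q2)"
  unfolding same_floquet_spectrum_iff_power_traces_eq
  by (intro ball_cong refl floquet_power_traces_eq_iff_invariants_eq[OF assms]) simp

lemma same_floquet_spectrum_imp_invariants_eq:
  fixes src tgt :: "'e \<Rightarrow> 'v::finite"
  assumes "finite E" and "same_floquet_spectrum E src tgt \<tau> Q1 Q2" and "0 < n"
  shows "inv_I_nm E src tgt \<tau> n m Q1 = inv_I_nm E src tgt \<tau> n m Q2"
proof -
  have "\<forall>k. power_trace (floquet_matrix E src tgt \<tau> Q1 k) n = power_trace (floquet_matrix E src tgt \<tau> Q2 k) n"
    using assms(2) unfolding same_floquet_spectrum_def by (blast intro: power_trace_eq_if_spectrum_mset_eq)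
  then show ?thesis using floquet_power_traces_eq_iff_invariants_eq[OF assms(1,3)] by blast
qed

lemma same_periodic_spectrum_iff_invariants_eq:
  fixes src tgt :: "'e \<Rightarrow> 'v::finite"
  assumes "finite E"
  shows "same_periodic_spectrum E src tgt \<tau> Q1 Q2 \<longleftrightarrow>
         (\<forall>n\<in>{1..CARD('v)}. inv_I_n E src tgt n Q1 = inv_I_n E src tgt n Q2)"
  unfolding same_periodic_spectrum_def spectrum_mset_eq_iff_power_trace_eq
  by (intro ball_cong refl periodic_power_trace_eq_iff_invariant_eq[OF assms]) simp

lemma same_periodic_spectrum_imp_invariant_eq:
  fixes src tgt :: "'e \<Rightarrow> 'v::finite"
  assumes "finite E" and "same_periodic_spectrum E src tgt \<tau> Q1 Q2" and "0 < n"
  shows "inv_I_n E src tgt n Q1 = inv_I_n E src tgt n Q2"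
proof -
  have "power_trace (floquet_matrix E src tgt \<tau> Q1 0) n = power_trace (floquet_matrix E src tgt \<tau> Q2 0) n"
    using assms(2) unfolding same_periodic_spectrum_def by (rule power_trace_eq_if_spectrum_mset_eq)
  then show ?thesis using periodic_power_trace_eq_iff_invariant_eq[OF assms(1,3)] by blast
qed

theorem theorem2p5:
  fixes E :: "'e set" and src tgt :: "'e \<Rightarrow> 'v::finite" and flip :: "'e \<Rightarrow> 'e"
    and \<tau> :: "'e \<Rightarrow> int ^ 'd"
  assumes "periodic_fundamental_graph E src tgt flip \<tau>"
  shows
    "(\<forall>Q1 Q2. same_floquet_spectrum E src tgt \<tau> Q1 Q2 \<longrightarrow>
        (\<forall>n m. 0 < n \<longrightarrow> inv_I_nm E src tgt \<tau> n m Q1 = inv_I_nm E src tgt \<tau> n m Q2))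
   \<and> (\<forall>Q1 Q2. same_floquet_spectrum E src tgt \<tau> Q1 Q2 \<longleftrightarrow>
        (\<forall>n\<in>{1..CARD('v)}. \<forall>m. inv_I_nm E src tgt \<tau> n m Q1 = inv_I_nm E src tgt \<tau> n m Q2))
   \<and> (\<forall>Q1 Q2. same_periodic_spectrum E src tgt \<tau> Q1 Q2 \<longrightarrow>
        (\<forall>n. 0 < n \<longrightarrow> inv_I_n E src tgt n Q1 = inv_I_n E src tgt n Q2))
   \<and> (\<forall>Q1 Q2. same_periodic_spectrum E src tgt \<tau> Q1 Q2 \<longleftrightarrow>
        (\<forall>n\<in>{1..CARD('v)}. inv_I_n E src tgt n Q1 = inv_I_n E src tgt n Q2))"
proof -
  have E: "finite E" using assms unfolding periodic_fundamental_graph_def by blast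
  show ?thesis
    by (intro conjI allI impI; rule same_floquet_spectrum_imp_invariants_eq[OF E]
        same_floquet_spectrum_iff_invariants_eq[OF E] same_periodic_spectrum_imp_invariant_eq[OF E]
        same_periodic_spectrum_iff_invariants_eq[OF E]; assumption)
qed

end
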